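(* There exists an online DTAP scheduler on $p$ processors that is $O(\sqrt{p})$-competitive for awake time: for every DTAP $\mathcal{D}$, its awake time on $\mathcal{D}$ is at most $C\sqrt{p}$ times the optimal offline awake time on $\mathcal{D}$, for an absolute constant $C$.
   Context: Serial-parallel scheduling with dependencies: $p$ identical processors. A DTAP is a finite set of tasks $\tau_1,\dots,\tau_n$, each specified by serial work $\sigma_i$, parallel work $\pi_i$ with $1\le\pi_i/\sigma_i\le p$, a time $t_i\ge0$, and a set $D_i\subseteq[n]$ of tasks it depends on; the dependency structure is acyclic. Task $\tau_i$ becomes available only at a time $t>t_i$ at which all tasks in $D_i$ have completed. A task is performed either by its serial job (work $\sigma_i$, at most one processor at any instant) or its parallel job (work $\pi_i$, any number of processors, rate equal to number of processors); the choice is irrevocable once started; time is continuous, allocations may be fractional, preemption allowed. A task is alive when available and not yet completed; the awake time is the measure of the set of times at which some task is alive. An online scheduler knows nothing about task $\tau_i$ until it becomes available. The optimal offline schedule knows the entire DTAP in advance. *)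

theory Defs
  imports "HOL-Analysis.Analysis"
begin

text \<open>A task: serial work, parallel work, release time, and the set of (indices of)
  tasks it depends on. A DTAP is a list of tasks; task i is the i-th entry.\<close>
record task =
  ser_work :: real
  par_work :: real
  release :: real
  deps :: "nat set"

definition valid_dtap :: "nat \<Rightarrow> task list \<Rightarrow> bool" where
  "valid_dtap p D \<longleftrightarrow>
     (\<forall>i < length D.
        0 < ser_work (D!i) \<and>
        1 \<le> par_work (D!i) / ser_work (D!i) \<and>
        par_work (D!i) / ser_work (D!i) \<le> real p \<and>
        0 \<le> release (D!i) \<and>
        deps (D!i) \<subseteq> {..<length D}) \<and>
     acyclic {(j, i). i < length D \<and> j \<in> deps (D!i)}"

record sched =
  srate :: "nat \<Rightarrow> real \<Rightarrow> real"
  prate :: "nat \<Rightarrow> real \<Rightarrow> real"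
  compl :: "nat \<Rightarrow> real"

definition completes_at :: "(real \<Rightarrow> real) \<Rightarrow> real \<Rightarrow> real \<Rightarrow> bool" where
  "completes_at r w c \<longleftrightarrow> integral {0..c} r = w \<and> (\<forall>s < c. integral {0..s} r < w)"

definition available :: "task list \<Rightarrow> sched \<Rightarrow> nat \<Rightarrow> real \<Rightarrow> bool" where
  "available D S i t \<longleftrightarrow> release (D!i) < t \<and> (\<forall>j \<in> deps (D!i). compl S j \<le> t)"

definition alive :: "task list \<Rightarrow> sched \<Rightarrow> nat \<Rightarrow> real \<Rightarrow> bool" where
  "alive D S i t \<longleftrightarrow> available D S i t \<and> t < compl S i"

definition valid_sched :: "nat \<Rightarrow> task list \<Rightarrow> sched \<Rightarrow> bool" where
  "valid_sched p D S \<longleftrightarrow>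
     (\<forall>i < length D.
        (\<forall>t. 0 \<le> srate S i t \<and> srate S i t \<le> 1 \<and> 0 \<le> prate S i t) \<and>
        (\<forall>T. srate S i integrable_on {0..T} \<and> prate S i integrable_on {0..T}) \<and>
        (\<forall>t. srate S i t + prate S i t > 0 \<longrightarrow> available D S i t) \<and>
        (((\<forall>t. prate S i t = 0) \<and> completes_at (srate S i) (ser_work (D!i)) (compl S i)) \<or>
         ((\<forall>t. srate S i t = 0) \<and> completes_at (prate S i) (par_work (D!i)) (compl S i)))) \<and>
     (\<forall>t. (\<Sum>i < length D. srate S i t + prate S i t) \<le> real p)"

definition awake_time :: "task list \<Rightarrow> sched \<Rightarrow> real" where
  "awake_time D S = measure lebesgue {t. \<exists>i < length D. alive D S i t}"

definition avail_time :: "task list \<Rightarrow> sched \<Rightarrow> nat \<Rightarrow> real" where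
  "avail_time D S i = Max (insert (release (D!i)) (compl S ` deps (D!i)))"

text \<open>Tasks that have become available strictly before time t (i.e. those revealed to
  an online scheduler by time t).\<close>
definition known :: "task list \<Rightarrow> sched \<Rightarrow> real \<Rightarrow> nat set" where
  "known D S t = {i. i < length D \<and> release (D!i) < t \<and> (\<forall>j \<in> deps (D!i). compl S j < t)}"

text \<open>Online (non-anticipative) scheduler: its behaviour on the time interval [0,t] depends
  only on the tasks revealed before t (their parameters, dependencies and revelation
  times), up to renaming of tasks; not on the number or identity of other tasks.\<close>
definition online :: "nat \<Rightarrow> (task list \<Rightarrow> sched) \<Rightarrow> bool" where
  "online p A \<longleftrightarrow>
     (\<forall>D D' t f.
        valid_dtap p D \<and> valid_dtap p D' \<and>
        bij_betw f (known D (A D) t) (known D' (A D') t) \<and>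
        (\<forall>i \<in> known D (A D) t.
           ser_work (D'!f i) = ser_work (D!i) \<and>
           par_work (D'!f i) = par_work (D!i) \<and>
           release (D'!f i) = release (D!i) \<and>
           deps (D'!f i) = f ` deps (D!i) \<and>
           avail_time D' (A D') (f i) = avail_time D (A D) i)
        \<longrightarrow> (\<forall>i \<in> known D (A D) t. \<forall>s \<le> t.
               srate (A D') (f i) s = srate (A D) i s \<and>
               prate (A D') (f i) s = prate (A D) i s))"

end

(*
  The scheduler runs a task serially if its parallel work is at least sqrt p times its serial
  work and in parallel otherwise, so the work it performs on any task is at most sqrt p times
  the serial work.  At every moment each active serial task receives one processor (an equal
  share if more than p are active) and the active parallel tasks share the remaining processors
  equally.  The allocation depends only on the set of active tasks, which makes the scheduler
  online; its completion times are obtained by an event-driven simulation.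

  While all p processors are busy, work is done at rate p.  The total work performed is at most
  sqrt p times the total serial work, and any schedule needs awake time at least the total serial
  work divided by p; so this busy time is at most sqrt p times the optimal awake time.  At any
  other moment every active task is serial and runs at full speed.  Follow, from an active task,
  the dependencies that made each task ready back to a release time: each task on this chain
  contributes at most its serial work, which is at most sqrt p times the time it is alive in the
  optimal schedule; these alive intervals are disjoint, and whenever the optimal schedule is idle
  the whole chain is complete.  So this time is also at most sqrt p times the optimal awake time,
  and altogether the awake time is at most 2 sqrt p times the optimal one.
*)

theory Submission
  imports Defs
begin

section \<open>Lebesgue measure on the real line\<close>

lemma sets_lebesgue_if_borel: "S \<in> sets borel \<Longrightarrow> S \<in> sets lebesgue"
  by (metis sets_completionI_sets sets_lborel)

lemma measure_lebesgue_mono_bounded: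
  "A \<in> sets borel \<Longrightarrow> B \<in> sets borel \<Longrightarrow> bounded B \<Longrightarrow> A \<subseteq> B \<Longrightarrow>
    measure lebesgue A \<le> measure lebesgue B"
  by (meson bounded_set_imp_lmeasurable measure_mono_fmeasurable sets_lebesgue_if_borel)

lemma measure_lebesgue_Un_finite:
  "A \<in> sets borel \<Longrightarrow> finite F \<Longrightarrow> measure lebesgue (A \<union> F) = measure lebesgue A"
  by (simp add: measure_Un_null_set negligible_finite sets_lebesgue_if_borel flip: negligible_iff_null_sets)

lemma measure_lebesgue_Un_disjoint:
  assumes "A \<in> sets borel" "B \<in> sets borel" "bounded A" "bounded B" "A \<inter> B = {}"
  shows "measure lebesgue (A \<union> B) = measure lebesgue A + measure lebesgue B"
proof -
  have "A \<in> lmeasurable" "B \<in> lmeasurable"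
    using assms by (auto intro: bounded_set_imp_lmeasurable sets_lebesgue_if_borel)
  then show ?thesis
    using assms(5) by (intro measure_Union) (auto simp: fmeasurable_def)
qed

lemma measure_Int_Ico_mono:
  fixes A :: "real set"
  assumes "A \<in> sets borel" "x \<le> y"
  shows "measure lebesgue (A \<inter> {r..<x}) \<le> measure lebesgue (A \<inter> {r..<y})"
  using assms by (intro measure_lebesgue_mono_bounded) (auto intro: bounded_Int)

lemma measure_lebesgue_Ico: "a \<le> b \<Longrightarrow> measure lebesgue {a..<b::real} = b - a"
  by (subst measure_completion) auto

lemma measure_lebesgue_Ioo: "a \<le> b \<Longrightarrow> measure lebesgue {a<..<b::real} = b - a"
  by (subst measure_completion) auto

lemma borel_measurable_of_finite_filter:
  fixes g :: "'a set \<Rightarrow> real" and P :: "'a \<Rightarrow> real \<Rightarrow> bool"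
  assumes "finite J" and "\<And>j. j \<in> J \<Longrightarrow> {s. P j s} \<in> sets borel"
  shows "(\<lambda>s. g {j \<in> J. P j s}) \<in> borel_measurable borel"
proof -
  have "g {j \<in> J. P j s} = (\<Sum>A\<in>Pow J. if \<forall>j\<in>J. P j s \<longleftrightarrow> j \<in> A then g A else 0)" for s
  proof -
    have "(\<Sum>A\<in>Pow J. if \<forall>j\<in>J. P j s \<longleftrightarrow> j \<in> A then g A else 0)
        = (\<Sum>A\<in>{{j \<in> J. P j s}}. if \<forall>j\<in>J. P j s \<longleftrightarrow> j \<in> A then g A else 0)"
      by (rule sum.mono_neutral_right) (use assms(1) in auto)
    then show ?thesis
      by simp
  qed
  moreover have [measurable]: "Measurable.pred borel (\<lambda>s. \<forall>j\<in>J. P j s \<longleftrightarrow> j \<in> A)" for A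
    using assms by (intro pred_intros_finite pred_intros_logic) (auto simp: pred_def)
  have "(\<lambda>s. \<Sum>A\<in>Pow J. if \<forall>j\<in>J. P j s \<longleftrightarrow> j \<in> A then g A else 0) \<in> borel_measurable borel"
    by measurable
  ultimately show ?thesis
    by simp
qed

lemma integrable_on_if_bounded_borel:
  fixes f :: "real \<Rightarrow> real"
  assumes "f \<in> borel_measurable borel" and "\<And>x. \<bar>f x\<bar> \<le> B"
  shows "f integrable_on {a..b}"
proof (rule measurable_bounded_by_integrable_imp_integrable)
  show "f \<in> borel_measurable (lebesgue_on {a..b})"
    using assms(1) by (simp add: measurable_completion measurable_restrict_space1)
qed (use assms(2) in auto)

lemma integral_le_measure:
  fixes f :: "real \<Rightarrow> real"
  assumes "f integrable_on {a..b}" and "X \<in> sets borel"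
    and "\<And>t. t \<in> {a..b} \<Longrightarrow> f t \<le> K * indicator X t"
  shows "integral {a..b} f \<le> K * measure lebesgue (X \<inter> {a..b})"
proof -
  have X: "X \<inter> {a..b} \<in> lmeasurable"
    using assms(2) by (intro bounded_set_imp_lmeasurable sets_lebesgue_if_borel) auto
  have "integral {a..b} f \<le> integral {a..b} (\<lambda>t. K * indicator X t)"
    using assms X integrable_on_mult_right[of "indicator X" "{a..b}" K]
    by (intro integral_le) (auto simp: integrable_on_indicator)
  then show ?thesis
    using X by (simp add: integral_indicator)
qed

lemma measure_le_integral:
  fixes f :: "real \<Rightarrow> real"
  assumes "f integrable_on {a..b}" and "X \<in> sets borel"
    and "\<And>t. t \<in> {a..b} \<Longrightarrow> K * indicator X t \<le> f t"
  shows "K * measure lebesgue (X \<inter> {a..b}) \<le> integral {a..b} f"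
proof -
  have X: "X \<inter> {a..b} \<in> lmeasurable"
    using assms(2) by (intro bounded_set_imp_lmeasurable sets_lebesgue_if_borel) auto
  have "integral {a..b} (\<lambda>t. K * indicator X t) \<le> integral {a..b} f"
    using assms X integrable_on_mult_right[of "indicator X" "{a..b}" K]
    by (intro integral_le) (auto simp: integrable_on_indicator)
  then show ?thesis
    using X by (simp add: integral_indicator)
qed

lemma sum_integrals_truncated:
  fixes r :: "'i \<Rightarrow> real \<Rightarrow> real"
  assumes "finite I" and "\<And>i b. i \<in> I \<Longrightarrow> r i integrable_on {0..b}" and "\<And>i. i \<in> I \<Longrightarrow> c i \<le> M"
  shows "(\<lambda>t. \<Sum>i\<in>I. if t \<le> c i then r i t else 0) integrable_on {0..M}"
    and "(\<Sum>i\<in>I. integral {0..c i} (r i)) = integral {0..M} (\<lambda>t. \<Sum>i\<in>I. if t \<le> c i then r i t else 0)"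
proof -
  have restrict: "min (c i) M = c i" if "i \<in> I" for i
    using assms(3)[OF that] by auto
  have trunc: "(\<lambda>t. if t \<le> c i then r i t else 0) integrable_on {0..M}"
    "integral {0..M} (\<lambda>t. if t \<le> c i then r i t else 0) = integral {0..c i} (r i)" if "i \<in> I" for i
    using integrable_restrict_Int[of "{..c i}" "r i" "{0..M}"] integral_restrict_Int[of "{0..M}" "{..c i}" "r i"]
      assms(2)[OF that] restrict[OF that] by simp_all
  show "(\<lambda>t. \<Sum>i\<in>I. if t \<le> c i then r i t else 0) integrable_on {0..M}"
    using trunc(1) by (rule integrable_sum[OF assms(1)])
  show "(\<Sum>i\<in>I. integral {0..c i} (r i)) = integral {0..M} (\<lambda>t. \<Sum>i\<in>I. if t \<le> c i then r i t else 0)"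
    using trunc by (simp add: integral_sum[OF assms(1)])
qed

lemma measure_Ico_bound_near_gap:
  fixes X Y :: "real set"
  assumes X: "X \<in> sets borel" and Y: "Y \<in> sets borel" and K: "1 \<le> K"
    and u: "r \<le> u" "u \<le> s" "s \<le> t" and tail: "{s<..<t} \<subseteq> Y"
    and gap: "measure lebesgue (X \<inter> {r..<u}) \<le> K * measure lebesgue (Y \<inter> {r..<u})"
  shows "measure lebesgue (X \<inter> {r..<t}) \<le> K * measure lebesgue (Y \<inter> {r..<t}) + (s - u)"
proof -
  have "measure lebesgue (X \<inter> {r..<t}) \<le> measure lebesgue ((X \<inter> {r..<u}) \<union> {u..<t})"
    using X by (intro measure_lebesgue_mono_bounded) auto
  also have "\<dots> \<le> measure lebesgue (X \<inter> {r..<u}) + (t - u)"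
    using measure_Un_le[of "X \<inter> {r..<u}" lebesgue "{u..<t}"] X u
    by (simp add: sets_lebesgue_if_borel measure_lebesgue_Ico)
  finally have X_bound: "measure lebesgue (X \<inter> {r..<t}) \<le> K * measure lebesgue (Y \<inter> {r..<u}) + (t - u)"
    using gap by simp
  have "measure lebesgue (Y \<inter> {r..<u}) + (t - s) = measure lebesgue ((Y \<inter> {r..<u}) \<union> {s<..<t})"
    using Y u by (subst measure_lebesgue_Un_disjoint) (auto simp: measure_lebesgue_Ioo)
  also have "\<dots> \<le> measure lebesgue (Y \<inter> {r..<t})"
    using Y tail u by (intro measure_lebesgue_mono_bounded) (auto intro: bounded_Int)
  finally have "K * measure lebesgue (Y \<inter> {r..<u}) + K * (t - s) \<le> K * measure lebesgue (Y \<inter> {r..<t})"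
    using K by (simp flip: distrib_left)
  moreover have "t - s \<le> K * (t - s)"
    using K u by (simp add: mult_le_cancel_right1)
  ultimately show ?thesis
    using X_bound by linarith
qed

text \<open>If the bound holds up to every point u outside Y, it holds up to t: beyond the last such
  point everything lies in Y, and K \<ge> 1 absorbs that stretch.\<close>

lemma measure_Ico_bound_from_gaps:
  fixes X Y :: "real set"
  assumes X: "X \<in> sets borel" and Y: "Y \<in> sets borel" and K: "1 \<le> K" and "r \<le> t"
    and gaps: "\<And>u. r \<le> u \<Longrightarrow> u \<le> t \<Longrightarrow> u \<notin> Y \<Longrightarrow>
      measure lebesgue (X \<inter> {r..<u}) \<le> K * measure lebesgue (Y \<inter> {r..<u})"
  shows "measure lebesgue (X \<inter> {r..<t}) \<le> K * measure lebesgue (Y \<inter> {r..<t})"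
proof -
  define U where "U = {u. r \<le> u \<and> u \<le> t \<and> u \<notin> Y}"
  show ?thesis
  proof (cases "U = {}")
    case True
    then have "Y \<inter> {r..<t} = {r..<t}"
      unfolding U_def by force
    then have "measure lebesgue (X \<inter> {r..<t}) \<le> measure lebesgue (Y \<inter> {r..<t})"
      using X Y by (intro measure_lebesgue_mono_bounded) (auto intro: bounded_Int)
    also have "\<dots> \<le> K * measure lebesgue (Y \<inter> {r..<t})"
      using K by (simp add: mult_le_cancel_right1)
    finally show ?thesis .
  next
    case False
    have bdd: "bdd_above U"
      unfolding U_def by (rule bdd_aboveI[of _ t]) auto
    have s_ub: "u \<le> Sup U" if "u \<in> U" for u
      using that bdd by (rule cSup_upper)
    have "Sup U \<le> t"
      by (rule cSup_least[OF False]) (auto simp: U_def)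
    have "r \<le> Sup U"
      using False s_ub unfolding U_def by force
    have tail: "{Sup U<..<t} \<subseteq> Y"
    proof
      fix v
      assume "v \<in> {Sup U<..<t}"
      then show "v \<in> Y"
        using s_ub[of v] \<open>r \<le> Sup U\<close> unfolding U_def by force
    qed
    show ?thesis
    proof (rule field_le_epsilon)
      fix e :: real
      assume "0 < e"
      then obtain u where u: "u \<in> U" "Sup U - e < u"
        using less_cSup_iff[OF False bdd, of "Sup U - e"] by auto
      then have "measure lebesgue (X \<inter> {r..<t}) \<le> K * measure lebesgue (Y \<inter> {r..<t}) + (Sup U - u)"
        using s_ub[OF u(1)] \<open>Sup U \<le> t\<close> tail gaps
        by (intro measure_Ico_bound_near_gap[OF X Y K]) (auto simp: U_def)
      then show "measure lebesgue (X \<inter> {r..<t}) \<le> K * measure lebesgue (Y \<inter> {r..<t}) + e"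
        using u(2) by linarith
    qed
  qed
qed

lemma measure_Ico_bound_by_cuts:
  fixes X Y R :: "real set"
  assumes R: "finite R" and X: "X \<in> sets borel" and Y: "Y \<in> sets borel" and K: "0 \<le> K"
    and cut: "\<And>T. X \<inter> {0..<T} \<noteq> {} \<Longrightarrow> \<exists>r\<in>R. 0 \<le> r \<and> r < T \<and>
      measure lebesgue (X \<inter> {r..<T}) \<le> K * measure lebesgue (Y \<inter> {r..<T})"
  shows "measure lebesgue (X \<inter> {0..<T}) \<le> K * measure lebesgue (Y \<inter> {0..<T})"
proof (induction "card {r \<in> R. r < T}" arbitrary: T rule: less_induct)
  case less
  show ?case
  proof (cases "X \<inter> {0..<T} = {}")
    case True
    then show ?thesis
      using K by simp
  next
    case False
    then obtain r where r: "r \<in> R" "0 \<le> r" "r < T"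
      and last_piece: "measure lebesgue (X \<inter> {r..<T}) \<le> K * measure lebesgue (Y \<inter> {r..<T})"
      using cut by blast
    have "card {r' \<in> R. r' < r} < card {r' \<in> R. r' < T}"
      using R r by (intro psubset_card_mono) auto
    then have first_pieces: "measure lebesgue (X \<inter> {0..<r}) \<le> K * measure lebesgue (Y \<inter> {0..<r})"
      by (rule less)
    have split: "A \<inter> {0..<T} = (A \<inter> {0..<r}) \<union> (A \<inter> {r..<T})" for A :: "real set"
      using r by auto
    have "measure lebesgue (X \<inter> {0..<T}) \<le> measure lebesgue (X \<inter> {0..<r}) + measure lebesgue (X \<inter> {r..<T})"
      unfolding split[of X] using X by (intro measure_Un_le) auto
    also have "\<dots> \<le> K * (measure lebesgue (Y \<inter> {0..<r}) + measure lebesgue (Y \<inter> {r..<T}))"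
      using first_pieces last_piece by (simp add: distrib_left)
    also have "\<dots> = K * measure lebesgue (Y \<inter> {0..<T})"
      unfolding split[of Y] using Y
      by (subst measure_lebesgue_Un_disjoint) (auto intro: bounded_subset[of "{0..T}"])
    finally show ?thesis .
  qed
qed

lemma completes_at_eq_if_agree:
  assumes f: "completes_at f w a" and g: "completes_at g w b" and agree: "\<And>s. s < min a b \<Longrightarrow> f s = g s"
  shows "a = b"
proof (rule ccontr)
  assume "a \<noteq> b"
  have "g s = f s" if "s \<in> {0..min a b} - {min a b}" for s
    using that agree[of s] by (cases "a \<le> b") (auto simp: min_def)
  then have same_integral: "integral {0..min a b} f = integral {0..min a b} g"
    by (intro integral_spike[where S="{min a b}"]) auto
  consider "a < b" | "b < a"
    using \<open>a \<noteq> b\<close> by linarith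
  then show False
  proof cases
    case 1
    then show False
      using f g same_integral unfolding completes_at_def by (auto simp: min_def)
  next
    case 2
    then show False
      using f g same_integral unfolding completes_at_def by (auto simp: min_def)
  qed
qed

section \<open>The scheduler\<close>

definition is_serial :: "nat \<Rightarrow> task list \<Rightarrow> nat \<Rightarrow> bool" where
  "is_serial p D i \<longleftrightarrow> sqrt (real p) * ser_work (D!i) \<le> par_work (D!i)"

definition work :: "nat \<Rightarrow> task list \<Rightarrow> nat \<Rightarrow> real" where
  "work p D i = (if is_serial p D i then ser_work (D!i) else par_work (D!i))"

definition ready_time :: "task list \<Rightarrow> (nat \<Rightarrow> real) \<Rightarrow> nat \<Rightarrow> real" where
  "ready_time D c i = Max (insert (release (D!i)) (c ` deps (D!i)))"

definition active :: "task list \<Rightarrow> (nat \<Rightarrow> real) \<Rightarrow> nat \<Rightarrow> real \<Rightarrow> bool" where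
  "active D c i s \<longleftrightarrow> i < length D \<and> ready_time D c i < s \<and> s < c i"

definition share :: "nat \<Rightarrow> task list \<Rightarrow> nat set \<Rightarrow> nat \<Rightarrow> real" where
  "share p D A i =
    (if i \<notin> A then 0
     else if is_serial p D i then min 1 (real p / card {j \<in> A. is_serial p D j})
     else (real p - min (card {j \<in> A. is_serial p D j}) (real p)) / card {j \<in> A. \<not> is_serial p D j})"

definition rate :: "nat \<Rightarrow> task list \<Rightarrow> (nat \<Rightarrow> real) \<Rightarrow> nat \<Rightarrow> real \<Rightarrow> real" where
  "rate p D c i s = share p D {j. active D c j s} i"

definition total_rate :: "nat \<Rightarrow> task list \<Rightarrow> (nat \<Rightarrow> real) \<Rightarrow> real \<Rightarrow> real" where
  "total_rate p D c s = (\<Sum>i<length D. rate p D c i s)"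

lemma share_nonneg: "0 \<le> share p D A i"
  unfolding share_def by (auto intro!: divide_nonneg_nonneg)

lemma share_le_1: "is_serial p D i \<Longrightarrow> share p D A i \<le> 1"
  unfolding share_def by auto

lemma card_filter_pos:
  assumes "finite {j \<in> A. P j}" "i \<in> A" "P i"
  shows "1 \<le> card {j \<in> A. P j}"
proof -
  have "0 < card {j \<in> A. P j}"
    using assms by (subst card_gt_0_iff) auto
  then show ?thesis
    by simp
qed

lemma share_le: "share p D A i \<le> max 1 (real p)"
proof (cases "i \<in> A \<and> \<not> is_serial p D i \<and> finite {j \<in> A. \<not> is_serial p D j}")
  case True
  then have "1 \<le> card {j \<in> A. \<not> is_serial p D j}"
    by (intro card_filter_pos) auto
  then have "real p - min (card {j \<in> A. is_serial p D j}) (real p) \<le> real p * card {j \<in> A. \<not> is_serial p D j}"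
    using mult_left_mono[of 1 "real (card {j \<in> A. \<not> is_serial p D j})" "real p"] by simp
  then have "(real p - min (card {j \<in> A. is_serial p D j}) (real p)) / card {j \<in> A. \<not> is_serial p D j} \<le> real p"
    using \<open>1 \<le> card _\<close> by (simp add: divide_le_eq)
  then show ?thesis
    using True unfolding share_def by auto
next
  case False
  then show ?thesis
    unfolding share_def by (auto simp: card_eq_0_iff)
qed

lemma sum_share:
  assumes "finite A"
  shows "(\<Sum>i\<in>A. share p D A i) = min (card {j \<in> A. is_serial p D j}) (real p)
    + (if card {j \<in> A. \<not> is_serial p D j} > 0 then real p - min (card {j \<in> A. is_serial p D j}) (real p) else 0)"
proof -
  define ns where "ns = card {j \<in> A. is_serial p D j}"
  define np where "np = card {j \<in> A. \<not> is_serial p D j}"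
  have "(\<Sum>i\<in>A. share p D A i)
      = (\<Sum>i\<in>A. if is_serial p D i then min 1 (real p / ns) else (real p - min ns (real p)) / np)"
    unfolding ns_def np_def share_def by (rule sum.cong) auto
  also have "\<dots> = ns * min 1 (real p / ns) + np * ((real p - min ns (real p)) / np)"
    unfolding sum.If_cases[OF assms] ns_def np_def by (simp add: Collect_conj_eq Int_commute Compl_eq)
  also have "ns * min 1 (real p / ns) = min ns (real p)"
    by (cases "ns = 0") (auto simp: min_def field_simps)
  also have "np * ((real p - min ns (real p)) / np) = (if np > 0 then real p - min ns (real p) else 0)"
    by auto
  finally show ?thesis
    unfolding ns_def np_def .
qed

lemma sum_share_le: "finite A \<Longrightarrow> (\<Sum>i\<in>A. share p D A i) \<le> real p"
  by (simp add: sum_share)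

lemma share_unsaturated:
  assumes "finite A" "(\<Sum>j\<in>A. share p D A j) < real p" "i \<in> A"
  shows "is_serial p D i \<and> share p D A i = 1"
proof -
  have no_parallel: "card {j \<in> A. \<not> is_serial p D j} = 0"
    using assms(2) unfolding sum_share[OF assms(1)] by (auto split: if_splits)
  then have serial: "is_serial p D i"
    using card_filter_pos[of A "\<lambda>j. \<not> is_serial p D j" i] assms(1,3) by force
  have "card {j \<in> A. is_serial p D j} < real p"
    using assms(2) no_parallel unfolding sum_share[OF assms(1)] by (auto simp: min_def split: if_splits)
  moreover have "1 \<le> card {j \<in> A. is_serial p D j}"
    using card_filter_pos[of A "is_serial p D" i] assms(1,3) serial by auto
  ultimately have "1 \<le> real p / card {j \<in> A. is_serial p D j}"
    by (simp add: le_divide_eq)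
  then show ?thesis
    using assms(3) serial unfolding share_def by auto
qed

lemma share_pos_exists:
  assumes "finite A" "A \<noteq> {}" "1 \<le> p"
  shows "\<exists>j\<in>A. 0 < share p D A j"
proof (cases "\<exists>j\<in>A. is_serial p D j")
  case True
  then obtain j where j: "j \<in> A" "is_serial p D j"
    by blast
  then have "1 \<le> card {j \<in> A. is_serial p D j}"
    using card_filter_pos[of A "is_serial p D" j] assms(1) by auto
  then have "0 < share p D A j"
    using j assms(3) unfolding share_def by auto
  then show ?thesis
    using j by blast
next
  case False
  obtain j where j: "j \<in> A"
    using assms(2) by blast
  then have "1 \<le> card {j \<in> A. \<not> is_serial p D j}"
    using card_filter_pos[of A "\<lambda>j. \<not> is_serial p D j" j] assms(1) False by auto
  moreover have "{j \<in> A. is_serial p D j} = {}"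
    using False by auto
  then have "card {j \<in> A. is_serial p D j} = 0"
    by (simp only: card.empty)
  ultimately have "0 < share p D A j"
    using j False assms(3) unfolding share_def by simp
  then show ?thesis
    using j by blast
qed

lemma share_transfer:
  assumes f: "bij_betw f A A'" and serial: "\<And>j. j \<in> A \<Longrightarrow> is_serial p D' (f j) = is_serial p D j"
    and i: "i \<in> A"
  shows "share p D' A' (f i) = share p D A i"
proof -
  have card_eq: "card {j \<in> A'. P' j} = card {j \<in> A. P j}" if "\<And>j. j \<in> A \<Longrightarrow> P' (f j) = P j" for P P'
  proof -
    have "bij_betw f {j \<in> A. P j} {j \<in> A'. P' j}"
      using f that unfolding bij_betw_def inj_on_def by auto
    then show ?thesis
      by (simp add: bij_betw_same_card)
  qed
  have "card {j \<in> A'. is_serial p D' j} = card {j \<in> A. is_serial p D j}"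
    "card {j \<in> A'. \<not> is_serial p D' j} = card {j \<in> A. \<not> is_serial p D j}"
    using serial by (auto intro: card_eq)
  moreover have "f i \<in> A'"
    using f i by (auto simp: bij_betw_def)
  ultimately show ?thesis
    unfolding share_def using i serial[OF i] by simp
qed

lemma finite_active: "finite {j. active D c j s}"
  by (rule finite_subset[of _ "{..<length D}"]) (auto simp: active_def)

lemma rate_nonneg: "0 \<le> rate p D c i s"
  unfolding rate_def by (rule share_nonneg)

lemma rate_pos_imp_active: "0 < rate p D c i s \<Longrightarrow> active D c i s"
  unfolding rate_def share_def by (auto split: if_splits)

lemma total_rate_eq_sum_share: "total_rate p D c s = (\<Sum>i\<in>{j. active D c j s}. share p D {j. active D c j s} i)"
  unfolding total_rate_def rate_def
  by (rule sum.mono_neutral_right) (auto simp: active_def share_def)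

lemma total_rate_le: "total_rate p D c s \<le> real p"
  unfolding total_rate_eq_sum_share using finite_active by (rule sum_share_le)

lemma rate_unsaturated:
  "total_rate p D c s < real p \<Longrightarrow> active D c i s \<Longrightarrow> is_serial p D i \<and> rate p D c i s = 1"
  unfolding rate_def total_rate_eq_sum_share using finite_active by (intro share_unsaturated) auto

lemma rate_measurable [measurable]: "rate p D c i \<in> borel_measurable borel"
proof -
  have "rate p D c i = (\<lambda>s. share p D {j \<in> {..<length D}. ready_time D c j < s \<and> s < c j} i)"
    unfolding rate_def active_def by auto
  also have "\<dots> \<in> borel_measurable borel"
    by (rule borel_measurable_of_finite_filter) auto
  finally show ?thesis .
qed

lemma rate_integrable: "rate p D c i integrable_on {a..b}"
  by (rule integrable_on_if_bounded_borel[OF rate_measurable, where B = "max 1 (real p)"])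
    (simp add: rate_def share_le share_nonneg)

lemma total_rate_measurable [measurable]: "total_rate p D c \<in> borel_measurable borel"
  unfolding total_rate_def by measurable

lemma valid_dtap_dep_less:
  "valid_dtap p D \<Longrightarrow> i < length D \<Longrightarrow> j \<in> deps (D!i) \<Longrightarrow> j < length D"
  unfolding valid_dtap_def by auto

lemma valid_dtap_finite_deps: "valid_dtap p D \<Longrightarrow> i < length D \<Longrightarrow> finite (deps (D!i))"
  unfolding valid_dtap_def by (meson finite_lessThan finite_subset)

lemma valid_dtap_release_nonneg: "valid_dtap p D \<Longrightarrow> i < length D \<Longrightarrow> 0 \<le> release (D!i)"
  unfolding valid_dtap_def by auto

lemma valid_dtap_ser_work_pos: "valid_dtap p D \<Longrightarrow> i < length D \<Longrightarrow> 0 < ser_work (D!i)"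
  unfolding valid_dtap_def by auto

lemma valid_dtap_ser_le_par:
  assumes "valid_dtap p D" "i < length D"
  shows "ser_work (D!i) \<le> par_work (D!i)"
proof -
  have "0 < ser_work (D!i)" "1 \<le> par_work (D!i) / ser_work (D!i)"
    using assms unfolding valid_dtap_def by auto
  then show ?thesis
    by (simp add: le_divide_eq)
qed

lemma valid_dtap_wf_deps:
  assumes "valid_dtap p D"
  shows "wf {(j, i). i < length D \<and> j \<in> deps (D!i)}"
proof (rule finite_acyclic_wf)
  show "finite {(j, i). i < length D \<and> j \<in> deps (D!i)}"
    by (rule finite_subset[of _ "{..<length D} \<times> {..<length D}"])
      (use assms valid_dtap_dep_less in blast, simp)
  show "acyclic {(j, i). i < length D \<and> j \<in> deps (D!i)}"
    using assms by (simp add: valid_dtap_def)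
qed

lemma work_pos: "valid_dtap p D \<Longrightarrow> i < length D \<Longrightarrow> 0 < work p D i"
  using valid_dtap_ser_work_pos valid_dtap_ser_le_par unfolding work_def by fastforce

lemma ready_time_ge_release: "finite (deps (D!i)) \<Longrightarrow> release (D!i) \<le> ready_time D c i"
  unfolding ready_time_def by (rule Max_ge) auto

lemma ready_time_ge_dep: "finite (deps (D!i)) \<Longrightarrow> d \<in> deps (D!i) \<Longrightarrow> c d \<le> ready_time D c i"
  unfolding ready_time_def by (rule Max_ge) auto

lemma ready_time_less_iff:
  "finite (deps (D!i)) \<Longrightarrow> ready_time D c i < s \<longleftrightarrow> release (D!i) < s \<and> (\<forall>d\<in>deps (D!i). c d < s)"
  unfolding ready_time_def by (subst Max_less_iff) auto

lemma ready_time_le_iff: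
  "finite (deps (D!i)) \<Longrightarrow> ready_time D c i \<le> s \<longleftrightarrow> release (D!i) \<le> s \<and> (\<forall>d\<in>deps (D!i). c d \<le> s)"
  unfolding ready_time_def by (subst Max_le_iff) auto

lemma ready_time_cases:
  assumes "finite (deps (D!i))"
  shows "ready_time D c i = release (D!i) \<or> (\<exists>d\<in>deps (D!i). ready_time D c i = c d)"
proof -
  have "ready_time D c i \<in> insert (release (D!i)) (c ` deps (D!i))"
    unfolding ready_time_def using assms by (intro Max_in) auto
  then show ?thesis
    by auto
qed

lemma active_cong:
  assumes D: "valid_dtap p D" and agree: "\<forall>j<length D. c j = c' j \<or> (T < c j \<and> T < c' j)"
    and "s \<le> T"
  shows "active D c j s = active D c' j s"
proof (cases "j < length D")
  case True
  have "\<forall>d\<in>deps (D!j). c d < s \<longleftrightarrow> c' d < s"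
    using agree valid_dtap_dep_less[OF D True] \<open>s \<le> T\<close> by fastforce
  moreover have "s < c j \<longleftrightarrow> s < c' j"
    using agree True \<open>s \<le> T\<close> by fastforce
  ultimately show ?thesis
    unfolding active_def ready_time_less_iff[OF valid_dtap_finite_deps[OF D True]] by auto
qed (simp add: active_def)

lemma rate_cong:
  assumes "valid_dtap p D" "\<forall>j<length D. c j = c' j \<or> (T < c j \<and> T < c' j)" "s \<le> T"
  shows "rate p D c i s = rate p D c' i s"
  unfolding rate_def using active_cong[OF assms] by simp

section \<open>Existence of self-consistent completion times\<close>

text \<open>The scheduler is defined implicitly: its completion times are a fixed point of the rates
  they induce.\<close>

definition consistent :: "nat \<Rightarrow> task list \<Rightarrow> (nat \<Rightarrow> real) \<Rightarrow> bool" where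
  "consistent p D c \<longleftrightarrow> (\<forall>i<length D. completes_at (rate p D c i) (work p D i) (c i))"

definition consistent_upto :: "nat \<Rightarrow> task list \<Rightarrow> real \<Rightarrow> (nat \<Rightarrow> real) \<Rightarrow> bool" where
  "consistent_upto p D T c \<longleftrightarrow> 0 \<le> T \<and>
     (\<forall>i<length D. c i \<le> T \<longrightarrow> completes_at (rate p D c i) (work p D i) (c i)) \<and>
     (\<forall>i<length D. T < c i \<longrightarrow> integral {0..T} (rate p D c i) < work p D i)"

definition progress :: "task list \<Rightarrow> real \<Rightarrow> (nat \<Rightarrow> real) \<Rightarrow> nat" where
  "progress D T c = card {i. i < length D \<and> c i \<le> T} +
     card {i. i < length D \<and> (c i \<le> T \<or> release (D!i) \<le> T \<and> (\<forall>d\<in>deps (D!i). c d \<le> T))}"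

lemma progress_le: "progress D T c \<le> 2 * length D"
proof -
  have "card {i. i < length D \<and> c i \<le> T} \<le> length D"
    "card {i. i < length D \<and> (c i \<le> T \<or> release (D!i) \<le> T \<and> (\<forall>d\<in>deps (D!i). c d \<le> T))} \<le> length D"
    by (auto intro: card_mono[of "{..<length D}", simplified])
  then show ?thesis
    unfolding progress_def by simp
qed

text \<open>On the interval from T to next_event the set of active
  tasks, and hence every rate, is constant; next_event is the first completion at these rates or
  the first release of a task whose dependencies are complete.\<close>

locale event_step =
  fixes p :: nat and D :: "task list" and T :: real and c :: "nat \<Rightarrow> real"
  assumes valid: "valid_dtap p D" and p_pos: "1 \<le> p" and upto: "consistent_upto p D T c"
    and pending: "\<exists>i<length D. T < c i"
begin

definition running :: "nat set" where
  "running = {j. j < length D \<and> T < c j \<and> release (D!j) \<le> T \<and> (\<forall>d\<in>deps (D!j). c d \<le> T)}"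

definition waiting :: "nat set" where
  "waiting = {j. j < length D \<and> T < c j \<and> T < release (D!j) \<and> (\<forall>d\<in>deps (D!j). c d \<le> T)}"

definition remaining :: "nat \<Rightarrow> real" where
  "remaining j = work p D j - integral {0..T} (rate p D c j)"

definition finish_time :: "nat \<Rightarrow> real" where
  "finish_time j = T + remaining j / share p D running j"

definition events :: "real set" where
  "events = finish_time ` {j \<in> running. 0 < share p D running j} \<union> (\<lambda>j. release (D!j)) ` waiting"

definition next_event :: real where
  "next_event = Min events"

definition finishing :: "nat \<Rightarrow> bool" where
  "finishing j \<longleftrightarrow> j \<in> running \<and> 0 < share p D running j \<and> finish_time j = next_event"

definition next_compl :: "nat \<Rightarrow> real" where
  "next_compl j = (if c j \<le> T then c j else if finishing j then next_event else next_event + 1)"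

lemma T_nonneg: "0 \<le> T"
  using upto unfolding consistent_upto_def by simp

lemma remaining_pos: "j < length D \<Longrightarrow> T < c j \<Longrightarrow> 0 < remaining j"
  using upto unfolding consistent_upto_def remaining_def by simp

lemma finite_running: "finite running"
  unfolding running_def by simp

lemma ready_pending_exists: "\<exists>z<length D. T < c z \<and> (\<forall>d\<in>deps (D!z). c d \<le> T)"
proof -
  obtain i where "i < length D" "T < c i"
    using pending by blast
  then obtain z where z: "z \<in> {j. j < length D \<and> T < c j}"
    and minimal: "\<And>y. (y, z) \<in> {(j, i). i < length D \<and> j \<in> deps (D!i)} \<Longrightarrow> y \<notin> {j. j < length D \<and> T < c j}"
    using wfE_min[OF valid_dtap_wf_deps[OF valid], of i "{j. j < length D \<and> T < c j}"] by blast
  have "c d \<le> T" if "d \<in> deps (D!z)" for d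
    using minimal[of d] that z valid_dtap_dep_less[OF valid, of z d] by fastforce
  then show ?thesis
    using z by blast
qed

lemma events_nonempty: "events \<noteq> {}"
proof -
  obtain z where z: "z < length D" "T < c z" "\<forall>d\<in>deps (D!z). c d \<le> T"
    using ready_pending_exists by blast
  show ?thesis
  proof (cases "release (D!z) \<le> T")
    case True
    then have "z \<in> running"
      unfolding running_def using z by blast
    then obtain j where "j \<in> running" "0 < share p D running j"
      using share_pos_exists[OF finite_running _ p_pos] by blast
    then show ?thesis
      unfolding events_def by blast
  next
    case False
    then have "z \<in> waiting"
      unfolding waiting_def using z by auto
    then show ?thesis
      unfolding events_def by blast
  qed
qed

lemma finite_events: "finite events"
  unfolding events_def running_def waiting_def by simp

lemma next_event_le_finish: "j \<in> running \<Longrightarrow> 0 < share p D running j \<Longrightarrow> next_event \<le> finish_time j"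
  unfolding next_event_def events_def using finite_events[unfolded events_def] by (intro Min_le) auto

lemma next_event_le_release: "j \<in> waiting \<Longrightarrow> next_event \<le> release (D!j)"
  unfolding next_event_def events_def using finite_events[unfolded events_def] by (intro Min_le) auto

lemma T_less_next_event: "T < next_event"
proof -
  have "T < x" if "x \<in> events" for x
    using that remaining_pos unfolding events_def finish_time_def running_def waiting_def by auto
  then show ?thesis
    unfolding next_event_def using Min_in[OF finite_events events_nonempty] by blast
qed

lemma next_compl_done: "c j \<le> T \<Longrightarrow> next_compl j = c j"
  unfolding next_compl_def by simp

lemma next_compl_pending: "T < c j \<Longrightarrow> next_event \<le> next_compl j"
  unfolding next_compl_def by simp

lemma next_compl_agree: "\<forall>j<length D. c j = next_compl j \<or> (T < c j \<and> T < next_compl j)"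
proof (intro allI impI)
  fix j
  show "c j = next_compl j \<or> (T < c j \<and> T < next_compl j)"
    using next_compl_done[of j] next_compl_pending[of j] T_less_next_event by (cases "c j \<le> T") auto
qed

lemma rate_before: "s \<le> T \<Longrightarrow> rate p D next_compl j s = rate p D c j s"
  using rate_cong[OF valid next_compl_agree] by simp

lemma active_between:
  assumes "T < s" "s < next_event"
  shows "{j. active D next_compl j s} = running"
proof (intro set_eqI iffI)
  fix j
  assume "j \<in> {j. active D next_compl j s}"
  then have j: "j < length D" "release (D!j) < s" "\<forall>d\<in>deps (D!j). next_compl d < s" "s < next_compl j"
    unfolding active_def using ready_time_less_iff[OF valid_dtap_finite_deps[OF valid]] by auto
  have "T < c j"
    using j(4) assms(1) next_compl_done[of j] by (cases "c j \<le> T") auto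
  moreover have deps_done: "\<forall>d\<in>deps (D!j). c d \<le> T"
  proof
    fix d
    assume "d \<in> deps (D!j)"
    then have "next_compl d < next_event"
      using j(3) assms(2) by force
    then show "c d \<le> T"
      using next_compl_pending[of d] by force
  qed
  moreover have "release (D!j) \<le> T"
  proof (rule ccontr)
    assume "\<not> release (D!j) \<le> T"
    then have "j \<in> waiting"
      unfolding waiting_def using j(1) \<open>T < c j\<close> deps_done by auto
    then show False
      using next_event_le_release j(2) assms(2) by fastforce
  qed
  ultimately show "j \<in> running"
    unfolding running_def using j(1) by blast
next
  fix j
  assume "j \<in> running"
  then have j: "j < length D" "T < c j" "release (D!j) \<le> T" "\<forall>d\<in>deps (D!j). c d \<le> T"
    unfolding running_def by auto
  have "\<forall>d\<in>deps (D!j). next_compl d < s"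
    using j(4) next_compl_done assms(1) by fastforce
  moreover have "s < next_compl j"
    using next_compl_pending[OF j(2)] assms(2) by simp
  ultimately show "j \<in> {j. active D next_compl j s}"
    unfolding active_def using ready_time_less_iff[OF valid_dtap_finite_deps[OF valid j(1)]] j(1,3) assms(1)
    by auto
qed

lemma integral_until:
  assumes "T \<le> x" "x \<le> next_event"
  shows "integral {0..x} (rate p D next_compl j) = integral {0..T} (rate p D c j) + (x - T) * share p D running j"
proof -
  have "integral {0..x} (rate p D next_compl j) = integral {0..T} (rate p D next_compl j) + integral {T..x} (rate p D next_compl j)"
    using assms T_nonneg by (intro Henstock_Kurzweil_Integration.integral_combine[symmetric] rate_integrable) auto
  moreover have "integral {0..T} (rate p D next_compl j) = integral {0..T} (rate p D c j)"
    by (rule integral_cong) (simp add: rate_before)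
  moreover have "integral {T..x} (rate p D next_compl j) = integral {T..x} (\<lambda>_. share p D running j)"
    using assms active_between by (intro integral_spike[where S="{T, x}"]) (auto simp: rate_def)
  ultimately show ?thesis
    using assms by simp
qed

lemma integral_upto_T_mono:
  assumes "s \<le> T"
  shows "integral {0..s} (rate p D c j) \<le> integral {0..T} (rate p D c j)"
proof (cases "0 \<le> s")
  case True
  have "integral {0..s} (rate p D c j) + integral {s..T} (rate p D c j) = integral {0..T} (rate p D c j)"
    using True assms by (intro Henstock_Kurzweil_Integration.integral_combine rate_integrable) auto
  moreover have "0 \<le> integral {s..T} (rate p D c j)"
    by (intro integral_nonneg rate_integrable rate_nonneg)
  ultimately show ?thesis
    by linarith
next
  case False
  then show ?thesis
    by (simp add: integral_nonneg rate_integrable rate_nonneg)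
qed

lemma completes_if_completed_by_T:
  assumes i: "i < length D" and "c i \<le> T"
  shows "completes_at (rate p D next_compl i) (work p D i) (next_compl i)"
proof -
  have "completes_at (rate p D c i) (work p D i) (c i)"
    using upto i \<open>c i \<le> T\<close> unfolding consistent_upto_def by simp
  moreover have "integral {0..y} (rate p D next_compl i) = integral {0..y} (rate p D c i)" if "y \<le> c i" for y
    using that \<open>c i \<le> T\<close> by (intro integral_cong) (simp add: rate_before)
  ultimately show ?thesis
    unfolding completes_at_def next_compl_done[OF \<open>c i \<le> T\<close>] by auto
qed

lemma completes_if_finishing:
  assumes i: "i < length D" and fin: "finishing i"
  shows "completes_at (rate p D next_compl i) (work p D i) next_event"
proof -
  have pending_i: "T < c i" and share_pos: "0 < share p D running i"
    and rem: "(next_event - T) * share p D running i = remaining i"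
    using fin unfolding finishing_def finish_time_def running_def by (auto simp: field_simps)
  have "integral {0..s} (rate p D next_compl i) < work p D i" if "s < next_event" for s
  proof (cases "s \<le> T")
    case True
    have "integral {0..s} (rate p D next_compl i) = integral {0..s} (rate p D c i)"
      using True by (intro integral_cong) (simp add: rate_before)
    also have "\<dots> \<le> integral {0..T} (rate p D c i)"
      using True by (rule integral_upto_T_mono)
    also have "\<dots> < work p D i"
      using upto i pending_i unfolding consistent_upto_def by simp
    finally show ?thesis .
  next
    case False
    have "(s - T) * share p D running i < (next_event - T) * share p D running i"
      using that share_pos by simp
    then show ?thesis
      using integral_until[of s i] False that rem unfolding remaining_def by simp
  qed
  moreover have "integral {0..next_event} (rate p D next_compl i) = work p D i"
    using integral_until[of next_event i] T_less_next_event rem unfolding remaining_def by simp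
  ultimately show ?thesis
    unfolding completes_at_def by auto
qed

lemma unfinished_at_next_event:
  assumes i: "i < length D" and later: "next_event < next_compl i"
  shows "integral {0..next_event} (rate p D next_compl i) < work p D i"
proof -
  have pending_i: "T < c i"
    using later next_compl_done[of i] T_less_next_event by (cases "c i \<le> T") auto
  have "integral {0..next_event} (rate p D next_compl i)
      = integral {0..T} (rate p D c i) + (next_event - T) * share p D running i"
    using integral_until[of next_event i] T_less_next_event by simp
  also have "\<dots> < work p D i"
  proof (cases "i \<in> running \<and> 0 < share p D running i")
    case True
    then have "\<not> finishing i"
      using later pending_i unfolding next_compl_def by auto
    then have "next_event < finish_time i"
      using next_event_le_finish True unfolding finishing_def by force
    then have "(next_event - T) * share p D running i < remaining i"
      using True unfolding finish_time_def by (simp add: field_simps)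
    then show ?thesis
      unfolding remaining_def by simp
  next
    case False
    then have "share p D running i = 0"
      using share_nonneg[of p D running i] unfolding share_def by (auto split: if_splits)
    then show ?thesis
      using upto i pending_i unfolding consistent_upto_def by simp
  qed
  finally show ?thesis .
qed

lemma consistent_upto_next: "consistent_upto p D next_event next_compl"
  unfolding consistent_upto_def
proof (intro conjI allI impI)
  show "0 \<le> next_event"
    using T_nonneg T_less_next_event by simp
next
  fix i
  assume i: "i < length D" and "next_compl i \<le> next_event"
  then consider "c i \<le> T" | "finishing i" "next_compl i = next_event"
    unfolding next_compl_def by (auto split: if_splits)
  then show "completes_at (rate p D next_compl i) (work p D i) (next_compl i)"
    using completes_if_completed_by_T[OF i] completes_if_finishing[OF i] by cases auto
qed (rule unfinished_at_next_event)

lemma progress_increases: "progress D T c < progress D next_event next_compl"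
proof -
  define completed where "completed T' c' = {i. i < length D \<and> c' i \<le> T'}"
    for T' :: real and c' :: "nat \<Rightarrow> real"
  define started where "started T' c' = {i. i < length D \<and> (c' i \<le> T' \<or> release (D!i) \<le> T' \<and> (\<forall>d\<in>deps (D!i). c' d \<le> T'))}"
    for T' :: real and c' :: "nat \<Rightarrow> real"
  have completed_mono: "completed T c \<subseteq> completed next_event next_compl"
    and started_mono: "started T c \<subseteq> started next_event next_compl"
    unfolding completed_def started_def using next_compl_done T_less_next_event by force+
  have finite: "finite (completed next_event next_compl)" "finite (started next_event next_compl)"
    unfolding completed_def started_def by auto
  have "next_event \<in> events"
    unfolding next_event_def using Min_in[OF finite_events events_nonempty] .
  then consider j where "finishing j" | j where "j \<in> waiting" "release (D!j) = next_event"
    unfolding events_def finishing_def by fastforce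
  then have "card (completed T c) + card (started T c) < card (completed next_event next_compl) + card (started next_event next_compl)"
  proof cases
    case (1 j)
    then have "j \<in> completed next_event next_compl - completed T c"
      unfolding completed_def finishing_def running_def next_compl_def by auto
    then have "card (completed T c) < card (completed next_event next_compl)"
      using completed_mono finite(1) by (intro psubset_card_mono) auto
    then show ?thesis
      using card_mono[OF finite(2) started_mono] by simp
  next
    case (2 j)
    then have "j \<in> started next_event next_compl - started T c"
      unfolding started_def waiting_def using next_compl_done T_less_next_event by auto
    then have "card (started T c) < card (started next_event next_compl)"
      using started_mono finite(2) by (intro psubset_card_mono) auto
    then show ?thesis
      using card_mono[OF finite(1) completed_mono] by simp
  qed
  then show ?thesis
    unfolding progress_def completed_def started_def .
qed

end

lemma consistent_exists:
  assumes valid: "valid_dtap p D" and p_pos: "1 \<le> p"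
  shows "\<exists>c. consistent p D c"
proof -
  have "\<exists>c'. consistent p D c'" if "consistent_upto p D T c" for T c
    using that
  proof (induction "2 * length D - progress D T c" arbitrary: T c rule: less_induct)
    case less
    show ?case
    proof (cases "\<exists>i<length D. T < c i")
      case True
      interpret event_step p D T c
        using valid p_pos less.prems True by unfold_locales
      have "2 * length D - progress D next_event next_compl < 2 * length D - progress D T c"
        using progress_increases progress_le[of D next_event next_compl] by linarith
      then show ?thesis
        using less.hyps consistent_upto_next by blast
    next
      case False
      then show ?thesis
        using less.prems unfolding consistent_upto_def consistent_def by (meson not_less)
    qed
  qed
  moreover have "consistent_upto p D 0 (\<lambda>_. 1)"
    unfolding consistent_upto_def using work_pos[OF valid] by auto
  ultimately show ?thesis
    by blast
qed

section \<open>Validity and non-anticipation\<close>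

definition sched_of :: "nat \<Rightarrow> task list \<Rightarrow> (nat \<Rightarrow> real) \<Rightarrow> sched" where
  "sched_of p D c =
    \<lparr>srate = (\<lambda>i s. if is_serial p D i then rate p D c i s else 0),
     prate = (\<lambda>i s. if is_serial p D i then 0 else rate p D c i s),
     compl = c\<rparr>"

definition balanced_sched :: "nat \<Rightarrow> task list \<Rightarrow> sched" where
  "balanced_sched p D = sched_of p D (SOME c. consistent p D c)"

lemma compl_sched_of [simp]: "compl (sched_of p D c) = c"
  by (simp add: sched_of_def)

lemma balanced_sched_eq: "balanced_sched p D = sched_of p D (compl (balanced_sched p D))"
  unfolding balanced_sched_def by simp

lemma consistent_balanced_sched:
  "valid_dtap p D \<Longrightarrow> 1 \<le> p \<Longrightarrow> consistent p D (compl (balanced_sched p D))"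
  unfolding balanced_sched_def compl_sched_of by (rule someI_ex[OF consistent_exists])

lemma available_iff_ready_time:
  "finite (deps (D!i)) \<Longrightarrow> available D S i t \<longleftrightarrow> release (D!i) < t \<and> ready_time D (compl S) i \<le> t"
  unfolding available_def ready_time_le_iff by auto

lemma srate_sched_of: "srate (sched_of p D c) i = (if is_serial p D i then rate p D c i else (\<lambda>_. 0))"
  by (auto simp: sched_of_def)

lemma prate_sched_of: "prate (sched_of p D c) i = (if is_serial p D i then (\<lambda>_. 0) else rate p D c i)"
  by (auto simp: sched_of_def)

lemma valid_sched_of:
  assumes valid: "valid_dtap p D" and cons: "consistent p D c"
  shows "valid_sched p D (sched_of p D c)"
  unfolding valid_sched_def
proof (intro conjI allI impI)
  fix t
  have "(\<Sum>i<length D. srate (sched_of p D c) i t + prate (sched_of p D c) i t) = total_rate p D c t"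
    unfolding total_rate_def srate_sched_of prate_sched_of by (intro sum.cong) auto
  then show "(\<Sum>i<length D. srate (sched_of p D c) i t + prate (sched_of p D c) i t) \<le> real p"
    using total_rate_le by simp
next
  fix i t
  assume i: "i < length D"
  show "0 \<le> srate (sched_of p D c) i t" "srate (sched_of p D c) i t \<le> 1" "0 \<le> prate (sched_of p D c) i t"
    unfolding srate_sched_of prate_sched_of rate_def by (simp_all add: share_nonneg share_le_1)
  show "srate (sched_of p D c) i integrable_on {0..t}" "prate (sched_of p D c) i integrable_on {0..t}"
    unfolding srate_sched_of prate_sched_of by (simp_all add: rate_integrable integrable_0)
  assume "0 < srate (sched_of p D c) i t + prate (sched_of p D c) i t"
  then have "0 < rate p D c i t"
    unfolding srate_sched_of prate_sched_of by (cases "is_serial p D i") simp_all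
  then have "active D c i t"
    by (rule rate_pos_imp_active)
  then show "available D (sched_of p D c) i t"
    using ready_time_ge_release[OF valid_dtap_finite_deps[OF valid i], of c]
    unfolding available_iff_ready_time[OF valid_dtap_finite_deps[OF valid i]] active_def by simp
next
  fix i
  assume i: "i < length D"
  have "completes_at (rate p D c i) (work p D i) (c i)"
    using cons i unfolding consistent_def by simp
  then show "(\<forall>t. prate (sched_of p D c) i t = 0) \<and> completes_at (srate (sched_of p D c) i) (ser_work (D!i)) (compl (sched_of p D c) i)
    \<or> (\<forall>t. srate (sched_of p D c) i t = 0) \<and> completes_at (prate (sched_of p D c) i) (par_work (D!i)) (compl (sched_of p D c) i)"
    unfolding srate_sched_of prate_sched_of compl_sched_of work_def by (cases "is_serial p D i") simp_all
qed

lemma valid_balanced_sched: "valid_dtap p D \<Longrightarrow> 1 \<le> p \<Longrightarrow> valid_sched p D (balanced_sched p D)"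
  by (subst balanced_sched_eq) (intro valid_sched_of consistent_balanced_sched)

lemma avail_time_sched_of: "avail_time D (sched_of p D c) i = ready_time D c i"
  unfolding avail_time_def ready_time_def by simp

lemma known_sched_of:
  "valid_dtap p D \<Longrightarrow> known D (sched_of p D c) t = {i. i < length D \<and> ready_time D c i < t}"
  unfolding known_def using ready_time_less_iff valid_dtap_finite_deps by fastforce

lemma rate_transfer:
  assumes f: "bij_betw f K K'"
    and sub: "{j. active D c j s} \<subseteq> K" and sub': "{j. active D' c' j s} \<subseteq> K'"
    and active_eq: "\<And>j. j \<in> K \<Longrightarrow> active D' c' (f j) s = active D c j s"
    and serial_eq: "\<And>j. j \<in> K \<Longrightarrow> is_serial p D' (f j) = is_serial p D j"
    and i: "i \<in> K"
  shows "rate p D' c' (f i) s = rate p D c i s"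
proof (cases "active D c i s")
  case True
  have "{j. active D' c' j s} = f ` {j. active D c j s}"
  proof (intro set_eqI iffI)
    fix j'
    assume "j' \<in> {j. active D' c' j s}"
    then obtain j where "j \<in> K" "j' = f j"
      using sub' bij_betw_imp_surj_on[OF f] by blast
    then show "j' \<in> f ` {j. active D c j s}"
      using \<open>j' \<in> {j. active D' c' j s}\<close> active_eq by auto
  qed (use sub active_eq in auto)
  moreover have "bij_betw f {j. active D c j s} (f ` {j. active D c j s})"
    using bij_betw_subset[OF f sub] by simp
  then have "share p D' (f ` {j. active D c j s}) (f i) = share p D {j. active D c j s} i"
    by (rule share_transfer) (use serial_eq sub True in auto)
  ultimately show ?thesis
    unfolding rate_def by simp
next
  case False
  then show ?thesis
    using active_eq[OF i] unfolding rate_def share_def by simp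
qed

lemma rate_transfer_known:
  assumes f: "bij_betw f K K'"
    and K: "K = {i. i < length D \<and> ready_time D c i < t}"
    and K': "K' = {i. i < length D' \<and> ready_time D' c' i < t}"
    and same: "\<And>j. j \<in> K \<Longrightarrow> is_serial p D' (f j) = is_serial p D j \<and> ready_time D' c' (f j) = ready_time D c j"
    and "s \<le> t" and compl_agree: "\<And>j. j \<in> K \<Longrightarrow> s < c j \<longleftrightarrow> s < c' (f j)" and i: "i \<in> K"
  shows "rate p D' c' (f i) s = rate p D c i s"
proof (rule rate_transfer[OF f _ _ _ _ i])
  show "{j. active D c j s} \<subseteq> K" "{j. active D' c' j s} \<subseteq> K'"
    unfolding K K' active_def using \<open>s \<le> t\<close> by auto
  show "active D' c' (f j) s = active D c j s" if "j \<in> K" for j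
    using same[OF that] compl_agree[OF that] bij_betwE[OF f] that unfolding K K' active_def by auto
  show "is_serial p D' (f j) = is_serial p D j" if "j \<in> K" for j
    using same[OF that] by simp
qed

lemma consistent_agree_before:
  assumes cons: "consistent p D c" "consistent p D' c'" and f: "bij_betw f K K'"
    and K: "K = {i. i < length D \<and> ready_time D c i < t}"
    and K': "K' = {i. i < length D' \<and> ready_time D' c' i < t}"
    and same: "\<And>j. j \<in> K \<Longrightarrow> work p D' (f j) = work p D j \<and> is_serial p D' (f j) = is_serial p D j
      \<and> ready_time D' c' (f j) = ready_time D c j"
  shows "\<forall>j\<in>K. c j = c' (f j) \<or> (t < c j \<and> t < c' (f j))"
proof (rule ccontr)
  define bad where "bad = {j \<in> K. \<not> (c j = c' (f j) \<or> (t < c j \<and> t < c' (f j)))}"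
  assume "\<not> (\<forall>j\<in>K. c j = c' (f j) \<or> (t < c j \<and> t < c' (f j)))"
  then have "bad \<noteq> {}"
    unfolding bad_def by auto
  moreover have "finite bad"
    unfolding bad_def K by auto
  \<comment> \<open>The earliest moment m at which some task completes in one run but not in the other.\<close>
  define m where "m = Min ((\<lambda>j. min (c j) (c' (f j))) ` bad)"
  have m_le: "m \<le> min (c j) (c' (f j))" if "j \<in> bad" for j
    unfolding m_def using \<open>finite bad\<close> that by (intro Min_le) auto
  have "m \<in> (\<lambda>j. min (c j) (c' (f j))) ` bad"
    unfolding m_def using \<open>finite bad\<close> \<open>bad \<noteq> {}\<close> by (intro Min_in) auto
  then obtain j0 where j0: "j0 \<in> bad" "m = min (c j0) (c' (f j0))"
    by blast
  have "m \<le> t" and "c j0 \<noteq> c' (f j0)" and j0K: "j0 \<in> K"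
    using j0 unfolding bad_def by auto
  have rate_eq: "rate p D c j0 s = rate p D' c' (f j0) s" if "s < min (c j0) (c' (f j0))" for s
  proof -
    have "s < m"
      using that j0(2) by simp
    have compl_agree: "s < c j \<longleftrightarrow> s < c' (f j)" if "j \<in> K" for j
    proof (cases "j \<in> bad")
      case True
      then show ?thesis
        using m_le[OF True] \<open>s < m\<close> by auto
    next
      case False
      then have "c j = c' (f j) \<or> (t < c j \<and> t < c' (f j))"
        using that unfolding bad_def by blast
      then show ?thesis
        using \<open>s < m\<close> \<open>m \<le> t\<close> by auto
    qed
    have "rate p D' c' (f j0) s = rate p D c j0 s"
    proof (rule rate_transfer_known[OF f K K' _ _ compl_agree j0K])
      show "is_serial p D' (f j) = is_serial p D j \<and> ready_time D' c' (f j) = ready_time D c j" if "j \<in> K" for j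
        using same[OF that] by blast
      show "s \<le> t"
        using \<open>s < m\<close> \<open>m \<le> t\<close> by simp
    qed
    then show ?thesis
      by simp
  qed
  have "completes_at (rate p D c j0) (work p D j0) (c j0)"
    and "completes_at (rate p D' c' (f j0)) (work p D j0) (c' (f j0))"
    using cons j0K bij_betwE[OF f] same[OF j0K] unfolding consistent_def K K' by auto
  then have "c j0 = c' (f j0)"
    using rate_eq by (rule completes_at_eq_if_agree)
  then show False
    using \<open>c j0 \<noteq> c' (f j0)\<close> by simp
qed

lemma balanced_sched_online:
  assumes p_pos: "1 \<le> p"
  shows "online p (balanced_sched p)"
  unfolding online_def
proof (intro allI impI)
  fix D D' t f
  let ?K = "known D (balanced_sched p D) t" and ?K' = "known D' (balanced_sched p D') t"
  assume H: "valid_dtap p D \<and> valid_dtap p D' \<and> bij_betw f ?K ?K' \<and>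
    (\<forall>i\<in>?K. ser_work (D'!f i) = ser_work (D!i) \<and> par_work (D'!f i) = par_work (D!i) \<and>
      release (D'!f i) = release (D!i) \<and> deps (D'!f i) = f ` deps (D!i) \<and>
      avail_time D' (balanced_sched p D') (f i) = avail_time D (balanced_sched p D) i)"
  define c where "c = compl (balanced_sched p D)"
  define c' where "c' = compl (balanced_sched p D')"
  have valid: "valid_dtap p D" "valid_dtap p D'" and f: "bij_betw f ?K ?K'"
    using H by auto
  have A: "balanced_sched p D = sched_of p D c" and A': "balanced_sched p D' = sched_of p D' c'"
    unfolding c_def c'_def by (rule balanced_sched_eq)+
  have K: "?K = {i. i < length D \<and> ready_time D c i < t}" and K': "?K' = {i. i < length D' \<and> ready_time D' c' i < t}"
    unfolding A A' using known_sched_of valid by auto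
  have same: "work p D' (f j) = work p D j \<and> is_serial p D' (f j) = is_serial p D j
      \<and> ready_time D' c' (f j) = ready_time D c j" if "j \<in> ?K" for j
  proof -
    have "ser_work (D'!f j) = ser_work (D!j)" "par_work (D'!f j) = par_work (D!j)"
      "avail_time D' (balanced_sched p D') (f j) = avail_time D (balanced_sched p D) j"
      using H that by blast+
    then show ?thesis
      unfolding A A' avail_time_sched_of work_def is_serial_def by simp
  qed
  have cons: "consistent p D c" "consistent p D' c'"
    unfolding c_def c'_def using consistent_balanced_sched valid p_pos by auto
  have agree: "\<forall>j\<in>?K. c j = c' (f j) \<or> (t < c j \<and> t < c' (f j))"
    using consistent_agree_before[OF cons f K K' same] by blast
  show "\<forall>i\<in>?K. \<forall>s\<le>t. srate (balanced_sched p D') (f i) s = srate (balanced_sched p D) i s \<and>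
    prate (balanced_sched p D') (f i) s = prate (balanced_sched p D) i s"
  proof (intro ballI allI impI)
    fix i s
    assume i: "i \<in> ?K" and "s \<le> t"
    have "rate p D' c' (f i) s = rate p D c i s"
      using agree same \<open>s \<le> t\<close> by (intro rate_transfer_known[OF f K K' _ \<open>s \<le> t\<close> _ i]) fastforce+
    then show "srate (balanced_sched p D') (f i) s = srate (balanced_sched p D) i s \<and>
      prate (balanced_sched p D') (f i) s = prate (balanced_sched p D) i s"
      unfolding A A' sched_of_def using same[OF i] by simp
  qed
qed

section \<open>Lower bounds on the awake time of any schedule\<close>

definition awake_set :: "task list \<Rightarrow> sched \<Rightarrow> real set" where
  "awake_set D S = {t. \<exists>i<length D. alive D S i t}"

definition alive_set :: "task list \<Rightarrow> sched \<Rightarrow> nat \<Rightarrow> real set" where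
  "alive_set D S i = {t. alive D S i t}"

lemma awake_time_eq: "awake_time D S = measure lebesgue (awake_set D S)"
  unfolding awake_time_def awake_set_def ..

lemma alive_iff_ready_time:
  "finite (deps (D!i)) \<Longrightarrow> alive D S i t \<longleftrightarrow> release (D!i) < t \<and> ready_time D (compl S) i \<le> t \<and> t < compl S i"
  unfolding alive_def available_iff_ready_time by auto

lemma alive_set_borel:
  assumes "valid_dtap p D" "i < length D"
  shows "alive_set D S i \<in> sets borel"
proof -
  have "alive_set D S i = {t. release (D!i) < t \<and> ready_time D (compl S) i \<le> t \<and> t < compl S i}"
    unfolding alive_set_def using alive_iff_ready_time[OF valid_dtap_finite_deps[OF assms]] by blast
  then show ?thesis
    by simp
qed

lemma awake_set_borel:
  assumes "valid_dtap p D"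
  shows "awake_set D S \<in> sets borel"
proof -
  have "awake_set D S = (\<Union>i<length D. alive_set D S i)"
    unfolding awake_set_def alive_set_def by auto
  then show ?thesis
    using alive_set_borel[OF assms] by auto
qed

lemma alive_set_subset_awake_set: "i < length D \<Longrightarrow> alive_set D S i \<subseteq> awake_set D S"
  unfolding alive_set_def awake_set_def by auto

lemma alive_set_subset: "alive_set D S i \<subseteq> {release (D!i)<..<compl S i}"
  unfolding alive_set_def alive_def available_def by auto

lemma alive_set_in_window:
  assumes "valid_dtap p D" "k < length D"
  shows "alive_set D S k \<subseteq> awake_set D S \<inter> {ready_time D (compl S) k..<compl S k}"
  using alive_set_subset_awake_set[OF assms(2)] unfolding alive_set_def
  by (auto simp: alive_iff_ready_time[OF valid_dtap_finite_deps[OF assms]])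

lemma awake_set_bounded:
  assumes "valid_dtap p D"
  shows "bounded (awake_set D S)"
proof (rule bounded_subset[of "{0..Max (compl S ` {..<length D})}"])
  show "awake_set D S \<subseteq> {0..Max (compl S ` {..<length D})}"
  proof
    fix t
    assume "t \<in> awake_set D S"
    then obtain i where i: "i < length D" "t \<in> alive_set D S i"
      unfolding awake_set_def alive_set_def by auto
    then have "compl S i \<le> Max (compl S ` {..<length D})"
      by (intro Max_ge) auto
    then show "t \<in> {0..Max (compl S ` {..<length D})}"
      using subsetD[OF alive_set_subset i(2)] valid_dtap_release_nonneg[OF assms i(1)] by auto
  qed
qed simp

lemma work_le_measure_support:
  fixes r :: "real \<Rightarrow> real"
  assumes "completes_at r w c" "r integrable_on {0..c}" "X \<in> sets borel"
    and "\<And>t. t \<in> {0..<c} \<Longrightarrow> r t \<le> b * indicator X t" "\<And>t. r t \<le> b"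
  shows "w \<le> b * measure lebesgue (X \<inter> {0..c})"
proof -
  have "w = integral {0..c} r"
    using assms(1) unfolding completes_at_def by simp
  also have "\<dots> \<le> b * measure lebesgue ((X \<union> {c}) \<inter> {0..c})"
  proof (rule integral_le_measure)
    show "r t \<le> b * indicator (X \<union> {c}) t" if "t \<in> {0..c}" for t
    proof (cases "t = c")
      case True
      then show ?thesis
        using assms(5) by simp
    next
      case False
      then show ?thesis
        using assms(4)[of t] that by (auto simp: indicator_def)
    qed
  qed (use assms(2,3) in auto)
  also have "(X \<union> {c}) \<inter> {0..c} = (X \<inter> {0..c}) \<union> (if 0 \<le> c then {c} else {})"
    by auto
  also have "measure lebesgue \<dots> = measure lebesgue (X \<inter> {0..c})"
    using assms(3) by (intro measure_lebesgue_Un_finite) auto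
  finally show ?thesis .
qed

lemma valid_sched_rates:
  assumes "valid_sched p D S" "i < length D"
  shows "0 \<le> srate S i t" "srate S i t \<le> 1" "0 \<le> prate S i t"
  using assms unfolding valid_sched_def by blast+

lemma valid_sched_integrable:
  assumes "valid_sched p D S" "i < length D"
  shows "srate S i integrable_on {0..T}" "prate S i integrable_on {0..T}"
  using assms unfolding valid_sched_def by blast+

lemma valid_sched_available:
  assumes "valid_sched p D S" "i < length D" "0 < srate S i t + prate S i t"
  shows "available D S i t"
  using assms unfolding valid_sched_def by blast

lemma valid_sched_job:
  assumes "valid_sched p D S" "i < length D"
  shows "(\<forall>t. prate S i t = 0) \<and> completes_at (srate S i) (ser_work (D!i)) (compl S i) \<or>
    (\<forall>t. srate S i t = 0) \<and> completes_at (prate S i) (par_work (D!i)) (compl S i)"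
  using assms unfolding valid_sched_def by blast

lemma valid_sched_rate_le:
  assumes "valid_sched p D S" "i < length D"
  shows "srate S i t + prate S i t \<le> real p"
proof -
  have "srate S i t + prate S i t = (\<Sum>j\<in>{i}. srate S j t + prate S j t)"
    by simp
  also have "\<dots> \<le> (\<Sum>j<length D. srate S j t + prate S j t)"
    using assms valid_sched_rates[OF assms(1)] by (intro sum_mono2) (auto intro: add_nonneg_nonneg)
  also have "\<dots> \<le> real p"
    using assms(1) unfolding valid_sched_def by blast
  finally show ?thesis .
qed

lemma ser_work_le_integral_total_rate:
  assumes valid: "valid_dtap p D" and S: "valid_sched p D S" and i: "i < length D"
  shows "ser_work (D!i) \<le> integral {0..compl S i} (\<lambda>t. srate S i t + prate S i t)"
  using valid_sched_job[OF S i]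
proof (elim disjE conjE)
  assume "\<forall>t. prate S i t = 0" "completes_at (srate S i) (ser_work (D!i)) (compl S i)"
  then show ?thesis
    unfolding completes_at_def by simp
next
  assume "\<forall>t. srate S i t = 0" "completes_at (prate S i) (par_work (D!i)) (compl S i)"
  then show ?thesis
    using valid_dtap_ser_le_par[OF valid i] unfolding completes_at_def by simp
qed

lemma ready_time_less_compl:
  assumes valid: "valid_dtap p D" and S: "valid_sched p D S" and i: "i < length D"
  shows "ready_time D (compl S) i < compl S i"
proof (rule ccontr)
  assume late: "\<not> ?thesis"
  have idle: "srate S i t + prate S i t = 0" if "t < compl S i" for t
  proof -
    have "\<not> available D S i t"
      using that late available_iff_ready_time[OF valid_dtap_finite_deps[OF valid i]] by simp
    then have "\<not> 0 < srate S i t + prate S i t"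
      using valid_sched_available[OF S i] by blast
    then show ?thesis
      using valid_sched_rates[OF S i, of t] by linarith
  qed
  have "integral {0..compl S i} (\<lambda>t. srate S i t + prate S i t) = integral {0..compl S i} (\<lambda>_. 0)"
    by (rule integral_spike[where S="{compl S i}"]) (use idle in auto)
  then show False
    using ser_work_le_integral_total_rate[OF assms] valid_dtap_ser_work_pos[OF valid i] by simp
qed

lemma job_work_le_alive_measure:
  assumes valid: "valid_dtap p D" and S: "valid_sched p D S" and i: "i < length D"
    and job: "completes_at r w (compl S i)" and r: "r = srate S i \<or> r = prate S i"
    and r_le: "\<And>t. r t \<le> b"
  shows "w \<le> b * measure lebesgue (alive_set D S i)"
proof -
  have r_nonneg: "0 \<le> r t" for t
    using r valid_sched_rates[OF S i] by auto
  have "r t \<le> b * indicator (alive_set D S i) t" if "t \<in> {0..<compl S i}" for t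
  proof (cases "0 < r t")
    case True
    then have "available D S i t"
      using r valid_sched_rates[OF S i, of t] by (intro valid_sched_available[OF S i]) auto
    then show ?thesis
      using that r_le[of t] unfolding alive_set_def alive_def by simp
  next
    case False
    then show ?thesis
      using r_nonneg[of t] order_trans[OF r_nonneg r_le] by (simp add: indicator_def)
  qed
  moreover have "r integrable_on {0..compl S i}"
    using r valid_sched_integrable[OF S i] by auto
  moreover have "alive_set D S i \<inter> {0..compl S i} = alive_set D S i"
    using alive_set_subset[of D S i] valid_dtap_release_nonneg[OF valid i] by fastforce
  ultimately show ?thesis
    using work_le_measure_support[OF job _ alive_set_borel[OF valid i, where S = S]] r_le by simp
qed

lemma alive_measure_lower_bound:
  assumes valid: "valid_dtap p D" and S: "valid_sched p D S" and i: "i < length D"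
  shows "min (ser_work (D!i)) (par_work (D!i) / real p) \<le> measure lebesgue (alive_set D S i)"
proof -
  have "0 < real p"
    using valid i unfolding valid_dtap_def by (meson order_trans zero_less_one less_le_trans)
  from valid_sched_job[OF S i] show ?thesis
  proof (elim disjE conjE)
    assume "completes_at (srate S i) (ser_work (D!i)) (compl S i)"
    then have "ser_work (D!i) \<le> 1 * measure lebesgue (alive_set D S i)"
      using valid_sched_rates[OF S i] by (intro job_work_le_alive_measure[OF valid S i]) auto
    then show ?thesis
      by simp
  next
    assume "completes_at (prate S i) (par_work (D!i)) (compl S i)"
    moreover have "prate S i t \<le> real p" for t
      using valid_sched_rate_le[OF S i, of t] valid_sched_rates[OF S i, of t] by linarith
    ultimately have "par_work (D!i) \<le> real p * measure lebesgue (alive_set D S i)"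
      by (intro job_work_le_alive_measure[OF valid S i]) auto
    then show ?thesis
      using \<open>0 < real p\<close> by (simp add: divide_le_eq mult.commute min_le_iff_disj)
  qed
qed

lemma truncated_rates_le:
  assumes S: "valid_sched p D S"
  shows "(\<Sum>i<length D. if t \<le> compl S i then srate S i t + prate S i t else 0)
    \<le> real p * indicator (awake_set D S \<union> compl S ` {..<length D}) t"
proof (cases "t \<in> awake_set D S \<union> compl S ` {..<length D}")
  case True
  have "(\<Sum>i<length D. if t \<le> compl S i then srate S i t + prate S i t else 0) \<le> (\<Sum>i<length D. srate S i t + prate S i t)"
    using valid_sched_rates[OF S] by (intro sum_mono) (auto intro: add_nonneg_nonneg)
  also have "\<dots> \<le> real p"
    using S unfolding valid_sched_def by blast
  finally show ?thesis
    using True by simp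
next
  case False
  have "(if t \<le> compl S i then srate S i t + prate S i t else 0) = 0" if "i < length D" for i
  proof (cases "t \<le> compl S i")
    case True
    have "\<not> 0 < srate S i t + prate S i t"
    proof
      assume "0 < srate S i t + prate S i t"
      then have "available D S i t"
        by (rule valid_sched_available[OF S that])
      moreover have "t < compl S i"
        using True False that by force
      ultimately show False
        using False that unfolding awake_set_def alive_def by auto
    qed
    then show ?thesis
      using valid_sched_rates[OF S that, of t] by simp
  qed simp
  then show ?thesis
    using False by simp
qed

lemma sum_ser_work_le_awake_time:
  assumes valid: "valid_dtap p D" and S: "valid_sched p D S"
  shows "(\<Sum>i<length D. ser_work (D!i)) \<le> real p * awake_time D S"
proof -
  define M where "M = Max (insert 0 (compl S ` {..<length D}))"
  define X where "X = awake_set D S \<union> compl S ` {..<length D}"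
  have compl_le: "compl S i \<le> M" if "i \<in> {..<length D}" for i
    unfolding M_def using that by (intro Max_ge) auto
  have X: "X \<in> sets borel"
    unfolding X_def using awake_set_borel[OF valid] by (auto intro: finite_imp_closed borel_closed)
  have rates_integrable: "(\<lambda>t. srate S i t + prate S i t) integrable_on {0..b}" if "i \<in> {..<length D}" for i b
    using valid_sched_integrable[OF S] that by (auto intro: integrable_add)
  have "(\<Sum>i<length D. ser_work (D!i)) \<le> (\<Sum>i<length D. integral {0..compl S i} (\<lambda>t. srate S i t + prate S i t))"
    using ser_work_le_integral_total_rate[OF valid S] by (intro sum_mono) simp
  also have "\<dots> = integral {0..M} (\<lambda>t. \<Sum>i<length D. if t \<le> compl S i then srate S i t + prate S i t else 0)"
    by (rule sum_integrals_truncated(2)[OF _ rates_integrable compl_le]) simp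
  also have "\<dots> \<le> real p * measure lebesgue (X \<inter> {0..M})"
    by (rule integral_le_measure[OF sum_integrals_truncated(1)[OF _ rates_integrable compl_le] X])
      (simp_all add: X_def truncated_rates_le[OF S])
  also have "measure lebesgue (X \<inter> {0..M}) \<le> measure lebesgue X"
    using X awake_set_bounded[OF valid] unfolding X_def by (intro measure_lebesgue_mono_bounded) auto
  also have "measure lebesgue X = awake_time D S"
    unfolding X_def awake_time_eq using awake_set_borel[OF valid] by (intro measure_lebesgue_Un_finite) auto
  finally show ?thesis
    by (simp add: mult_left_mono)
qed

lemma idle_imp_completed:
  assumes valid: "valid_dtap p D" and idle: "u \<notin> awake_set D S"
  shows "j < length D \<Longrightarrow> \<forall>y. (y, j) \<in> {(j, i). i < length D \<and> j \<in> deps (D!i)}\<^sup>* \<longrightarrow> release (D!y) < u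
    \<Longrightarrow> compl S j \<le> u"
proof (induction j rule: wf_induct_rule[OF valid_dtap_wf_deps[OF valid]])
  case (1 j)
  have "compl S d \<le> u" if d: "d \<in> deps (D!j)" for d
  proof -
    have edge: "(d, j) \<in> {(j, i). i < length D \<and> j \<in> deps (D!i)}"
      using d 1(2) by auto
    moreover have "\<forall>y. (y, d) \<in> {(j, i). i < length D \<and> j \<in> deps (D!i)}\<^sup>* \<longrightarrow> release (D!y) < u"
      using 1(3) edge by (meson rtrancl_into_rtrancl)
    ultimately show ?thesis
      using 1(1) valid_dtap_dep_less[OF valid 1(2) d] by blast
  qed
  then have "available D S j u"
    unfolding available_def using 1(3) by blast
  then show ?case
    using idle 1(2) unfolding awake_set_def alive_def by force
qed

lemma serial_ser_work_le_alive_measure: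
  assumes valid: "valid_dtap p D" and S: "valid_sched p D S" and i: "i < length D"
    and p_pos: "1 \<le> p" and serial: "is_serial p D i"
  shows "ser_work (D!i) \<le> sqrt (real p) * measure lebesgue (alive_set D S i)"
proof -
  have sqrt_pos: "0 < sqrt (real p)" "1 \<le> sqrt (real p)"
    using p_pos by auto
  have "ser_work (D!i) / sqrt (real p) \<le> ser_work (D!i)"
    using sqrt_pos valid_dtap_ser_work_pos[OF valid i] by (simp add: divide_le_eq)
  moreover have "ser_work (D!i) / sqrt (real p) \<le> par_work (D!i) / real p"
  proof -
    have "ser_work (D!i) * real p = (sqrt (real p) * ser_work (D!i)) * sqrt (real p)"
      by (simp add: mult_ac)
    also have "\<dots> \<le> par_work (D!i) * sqrt (real p)"
      using serial sqrt_pos unfolding is_serial_def by (intro mult_right_mono) auto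
    finally show ?thesis
      using sqrt_pos p_pos by (simp add: divide_simps)
  qed
  ultimately have "ser_work (D!i) / sqrt (real p) \<le> measure lebesgue (alive_set D S i)"
    using alive_measure_lower_bound[OF valid S i] by linarith
  then show ?thesis
    using sqrt_pos by (simp add: divide_le_eq mult.commute)
qed

section \<open>Competitive analysis\<close>

locale balanced_run =
  fixes p :: nat and D :: "task list" and c :: "nat \<Rightarrow> real"
  assumes valid: "valid_dtap p D" and p_pos: "1 \<le> p" and cons: "consistent p D c"
begin

definition unsaturated :: "real set" where
  "unsaturated = {t. (\<exists>i<length D. active D c i t) \<and> total_rate p D c t < real p}"

definition saturated :: "real set" where
  "saturated = {t. (\<exists>i<length D. active D c i t) \<and> total_rate p D c t = real p}"

lemma unsaturated_borel: "unsaturated \<in> sets borel"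
  unfolding unsaturated_def active_def by measurable

lemma saturated_borel: "saturated \<in> sets borel"
  unfolding saturated_def active_def by measurable

lemma ready_time_less: "i < length D \<Longrightarrow> ready_time D c i < c i"
  using ready_time_less_compl[OF valid valid_sched_of[OF valid cons]] by simp

lemma ready_time_nonneg: "i < length D \<Longrightarrow> 0 \<le> ready_time D c i"
  using ready_time_ge_release[OF valid_dtap_finite_deps[OF valid]] valid_dtap_release_nonneg[OF valid]
  by (meson order_trans)

lemma active_pos: "active D c i t \<Longrightarrow> 0 < t"
  unfolding active_def using ready_time_nonneg by fastforce

lemma work_le:
  assumes "i < length D"
  shows "work p D i \<le> sqrt (real p) * ser_work (D!i)"
proof (cases "is_serial p D i")
  case True
  have "1 * ser_work (D!i) \<le> sqrt (real p) * ser_work (D!i)"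
    using p_pos valid_dtap_ser_work_pos[OF valid assms] by (intro mult_right_mono) auto
  then show ?thesis
    using True unfolding work_def by simp
next
  case False
  then show ?thesis
    unfolding work_def is_serial_def by simp
qed

lemma saturated_bound:
  assumes S: "valid_sched p D S"
  shows "measure lebesgue saturated \<le> sqrt (real p) * awake_time D S"
proof -
  define M where "M = Max (insert 0 (c ` {..<length D}))"
  have c_le: "c i \<le> M" if "i \<in> {..<length D}" for i
    unfolding M_def using that by (intro Max_ge) auto
  have "saturated \<subseteq> {0..M}"
    unfolding saturated_def using active_pos c_le by (force simp: active_def)
  then have "real p * measure lebesgue saturated = real p * measure lebesgue (saturated \<inter> {0..M})"
    by (simp add: Int_absorb2)
  also have "\<dots> \<le> integral {0..M} (\<lambda>t. \<Sum>i<length D. if t \<le> c i then rate p D c i t else 0)"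
  proof (rule measure_le_integral[OF sum_integrals_truncated(1)[OF _ _ c_le] saturated_borel])
    fix t
    have "rate p D c i t = 0" if "c i < t" for i
      using rate_pos_imp_active[of p D c i t] rate_nonneg[of p D c i t] that
      unfolding active_def by linarith
    then have "(\<Sum>i<length D. if t \<le> c i then rate p D c i t else 0) = total_rate p D c t"
      unfolding total_rate_def by (intro sum.cong) auto
    moreover have "0 \<le> total_rate p D c t"
      unfolding total_rate_def by (intro sum_nonneg rate_nonneg)
    ultimately show "real p * indicator saturated t \<le> (\<Sum>i<length D. if t \<le> c i then rate p D c i t else 0)"
      unfolding saturated_def indicator_def by auto
  qed (simp_all add: rate_integrable)
  also have "\<dots> = (\<Sum>i<length D. integral {0..c i} (rate p D c i))"
    by (rule sum_integrals_truncated(2)[symmetric, OF _ _ c_le]) (simp_all add: rate_integrable)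
  also have "\<dots> = (\<Sum>i<length D. work p D i)"
    using cons unfolding consistent_def completes_at_def by simp
  also have "\<dots> \<le> sqrt (real p) * (\<Sum>i<length D. ser_work (D!i))"
    unfolding sum_distrib_left by (intro sum_mono work_le) simp
  also have "\<dots> \<le> sqrt (real p) * (real p * awake_time D S)"
    using sum_ser_work_le_awake_time[OF valid S] by (intro mult_left_mono) auto
  finally show ?thesis
    using p_pos by (simp add: mult.left_commute)
qed

lemma unsaturated_active_bound:
  assumes S: "valid_sched p D S" and k: "k < length D"
  shows "measure lebesgue (unsaturated \<inter> {ready_time D c k..<c k}) \<le> sqrt (real p) * measure lebesgue (alive_set D S k)"
proof -
  define Y where "Y = unsaturated \<inter> {ready_time D c k<..<c k}"
  have Y: "Y \<in> sets borel"
    unfolding Y_def using unsaturated_borel by simp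
  have in_Y: "active D c k t \<and> total_rate p D c t < real p" if "t \<in> Y" for t
    using that k unfolding Y_def unsaturated_def active_def by auto
  have "measure lebesgue (unsaturated \<inter> {ready_time D c k..<c k}) \<le> measure lebesgue (Y \<union> {ready_time D c k})"
    unfolding Y_def using unsaturated_borel
    by (intro measure_lebesgue_mono_bounded) (auto intro: bounded_subset[of "{ready_time D c k..c k}"])
  also have "\<dots> = measure lebesgue Y"
    using Y by (rule measure_lebesgue_Un_finite) simp
  also have "\<dots> \<le> sqrt (real p) * measure lebesgue (alive_set D S k)"
  proof (cases "is_serial p D k")
    case True
    have "Y \<inter> {0..c k} = Y"
      unfolding Y_def using ready_time_nonneg[OF k] by auto
    moreover have "1 * measure lebesgue (Y \<inter> {0..c k}) \<le> integral {0..c k} (rate p D c k)"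
    proof (rule measure_le_integral[OF rate_integrable Y])
      show "1 * indicator Y t \<le> rate p D c k t" for t
        using in_Y[of t] rate_unsaturated[of p D c t k] rate_nonneg[of p D c k t]
        by (cases "t \<in> Y") auto
    qed
    ultimately have "measure lebesgue Y \<le> integral {0..c k} (rate p D c k)"
      by simp
    also have "\<dots> = ser_work (D!k)"
      using cons k True unfolding consistent_def completes_at_def work_def by simp
    also have "\<dots> \<le> sqrt (real p) * measure lebesgue (alive_set D S k)"
      by (rule serial_ser_work_le_alive_measure[OF valid S k p_pos True])
    finally show ?thesis
      by simp
  next
    case False
    then have "Y = {}"
      using in_Y rate_unsaturated by blast
    then show ?thesis
      by simp
  qed
  finally show ?thesis .
qed

lemma ancestor_ready_time_le:
  assumes "(y, j) \<in> {(j, i). i < length D \<and> j \<in> deps (D!i)}\<^sup>*" "j < length D"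
  shows "y < length D \<and> ready_time D c y \<le> ready_time D c j"
  using assms(1)
proof (induction rule: converse_rtrancl_induct)
  case base
  then show ?case
    using assms(2) by simp
next
  case (step y z)
  then have z: "z < length D" "y \<in> deps (D!z)"
    by auto
  have y: "y < length D"
    using valid_dtap_dep_less[OF valid z] .
  have "ready_time D c y < c y"
    using ready_time_less[OF y] .
  also have "c y \<le> ready_time D c z"
    using ready_time_ge_dep[OF valid_dtap_finite_deps[OF valid z(1)] z(2)] .
  finally show ?case
    using step y by auto
qed

lemma completed_if_idle:
  assumes "u \<notin> awake_set D S" "k < length D" "ready_time D c k < u"
  shows "compl S k \<le> u"
proof (rule idle_imp_completed[OF valid assms(1,2)], intro allI impI)
  fix y
  assume "(y, k) \<in> {(j, i). i < length D \<and> j \<in> deps (D!i)}\<^sup>*"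
  then have "y < length D" "ready_time D c y \<le> ready_time D c k"
    using ancestor_ready_time_le assms(2) by blast+
  then show "release (D!y) < u"
    using ready_time_ge_release[OF valid_dtap_finite_deps[OF valid]] assms(3) by (meson le_less_trans order_trans)
qed

lemma unsaturated_window_bound:
  assumes S: "valid_sched p D S" and k: "k < length D" and r: "r \<le> ready_time D (compl S) k"
  shows "measure lebesgue (unsaturated \<inter> {ready_time D c k..<c k})
    \<le> sqrt (real p) * measure lebesgue (awake_set D S \<inter> {r..<compl S k})"
proof -
  have "alive_set D S k \<subseteq> awake_set D S \<inter> {r..<compl S k}"
    using alive_set_in_window[OF valid k, of S] r by auto
  then have "measure lebesgue (alive_set D S k) \<le> measure lebesgue (awake_set D S \<inter> {r..<compl S k})"
    using awake_set_borel[OF valid] alive_set_borel[OF valid k]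
    by (intro measure_lebesgue_mono_bounded) (auto intro: bounded_Int)
  then show ?thesis
    using order_trans[OF unsaturated_active_bound[OF S k] mult_left_mono[of _ _ "sqrt (real p)"]] by simp
qed

lemma unsaturated_chain_link:
  assumes S: "valid_sched p D S" and k: "k < length D"
    and d: "d \<in> deps (D!k)" "ready_time D c k = c d" and r: "r \<le> compl S d"
    and prev: "measure lebesgue (unsaturated \<inter> {r..<c d})
      \<le> sqrt (real p) * measure lebesgue (awake_set D S \<inter> {r..<compl S d})"
  shows "measure lebesgue (unsaturated \<inter> {r..<c k})
    \<le> sqrt (real p) * measure lebesgue (awake_set D S \<inter> {r..<compl S k})"
proof -
  let ?W = "awake_set D S"
  have compl_d: "compl S d \<le> ready_time D (compl S) k"
    by (rule ready_time_ge_dep[OF valid_dtap_finite_deps[OF valid k] d(1)])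
  have "unsaturated \<inter> {r..<c k} \<subseteq> (unsaturated \<inter> {r..<c d}) \<union> (unsaturated \<inter> {ready_time D c k..<c k})"
    using d(2) by auto
  then have "measure lebesgue (unsaturated \<inter> {r..<c k})
      \<le> measure lebesgue (unsaturated \<inter> {r..<c d}) + measure lebesgue (unsaturated \<inter> {ready_time D c k..<c k})"
    using unsaturated_borel
    by (intro order_trans[OF measure_lebesgue_mono_bounded measure_Un_le])
      (auto intro: bounded_Un bounded_Int sets_lebesgue_if_borel)
  also have "\<dots> \<le> sqrt (real p) * measure lebesgue (?W \<inter> {r..<compl S d})
      + sqrt (real p) * measure lebesgue (?W \<inter> {compl S d..<compl S k})"
    using prev unsaturated_window_bound[OF S k compl_d] by simp
  also have "\<dots> = sqrt (real p) * measure lebesgue (?W \<inter> {r..<compl S k})"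
  proof -
    have "?W \<inter> {r..<compl S k} = (?W \<inter> {r..<compl S d}) \<union> (?W \<inter> {compl S d..<compl S k})"
      using r compl_d ready_time_less_compl[OF valid S k] by auto
    also have "measure lebesgue \<dots>
        = measure lebesgue (?W \<inter> {r..<compl S d}) + measure lebesgue (?W \<inter> {compl S d..<compl S k})"
      using awake_set_borel[OF valid] by (intro measure_lebesgue_Un_disjoint) (auto intro: bounded_Int)
    finally show ?thesis
      by (simp add: distrib_left)
  qed
  finally show ?thesis .
qed

text \<open>The unsaturated time of the scheduler from r until the completion of k, cut off at any
  point u \<ge> r where the optimal schedule S is idle, is charged to the awake time of S over the
  same stretch.  This propagates along the dependencies that made tasks ready, starting at a
  release time.\<close>

definition chain_charged :: "sched \<Rightarrow> nat \<Rightarrow> real \<Rightarrow> bool" where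
  "chain_charged S k r \<longleftrightarrow> (\<forall>u. r \<le> u \<longrightarrow> u \<notin> awake_set D S \<longrightarrow>
    measure lebesgue (unsaturated \<inter> {r..<min u (c k)})
      \<le> sqrt (real p) * measure lebesgue (awake_set D S \<inter> {r..<min u (compl S k)}))"

lemma chain_charged_release:
  assumes S: "valid_sched p D S" and k: "k < length D" and ready: "ready_time D c k = release (D!k)"
  shows "chain_charged S k (release (D!k))"
  unfolding chain_charged_def
proof (intro allI impI)
  fix u
  assume u: "release (D!k) \<le> u" "u \<notin> awake_set D S"
  show "measure lebesgue (unsaturated \<inter> {release (D!k)..<min u (c k)})
    \<le> sqrt (real p) * measure lebesgue (awake_set D S \<inter> {release (D!k)..<min u (compl S k)})"
  proof (cases "u \<le> ready_time D c k")
    case True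
    then show ?thesis
      using ready u(1) by simp
  next
    case False
    have "compl S k \<le> u"
      using False by (intro completed_if_idle u(2) k) simp
    have "measure lebesgue (unsaturated \<inter> {release (D!k)..<min u (c k)})
        \<le> measure lebesgue (unsaturated \<inter> {release (D!k)..<c k})"
      using unsaturated_borel by (intro measure_Int_Ico_mono) auto
    also have "\<dots> = measure lebesgue (unsaturated \<inter> {ready_time D c k..<c k})"
      by (simp add: ready)
    also have "\<dots> \<le> sqrt (real p) * measure lebesgue (awake_set D S \<inter> {release (D!k)..<compl S k})"
      by (rule unsaturated_window_bound[OF S k ready_time_ge_release[OF valid_dtap_finite_deps[OF valid k]]])
    finally show ?thesis
      using \<open>compl S k \<le> u\<close> by (simp add: min_absorb2)
  qed
qed

lemma chain_charged_dependency:
  assumes S: "valid_sched p D S" and k: "k < length D"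
    and d: "d \<in> deps (D!k)" "ready_time D c k = c d" and r: "r \<le> compl S d"
    and charged: "chain_charged S d r"
  shows "chain_charged S k r"
  unfolding chain_charged_def
proof (intro allI impI)
  fix u
  assume u: "r \<le> u" "u \<notin> awake_set D S"
  have d_less: "d < length D"
    by (rule valid_dtap_dep_less[OF valid k d(1)])
  have compl_d: "compl S d \<le> compl S k"
    using ready_time_ge_dep[OF valid_dtap_finite_deps[OF valid k] d(1), of "compl S"]
      ready_time_less_compl[OF valid S k] by simp
  have prev: "measure lebesgue (unsaturated \<inter> {r..<min u (c d)})
      \<le> sqrt (real p) * measure lebesgue (awake_set D S \<inter> {r..<min u (compl S d)})"
    using charged u unfolding chain_charged_def by blast
  show "measure lebesgue (unsaturated \<inter> {r..<min u (c k)})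
    \<le> sqrt (real p) * measure lebesgue (awake_set D S \<inter> {r..<min u (compl S k)})"
  proof (cases "u \<le> c d")
    case True
    then have "min u (c k) = min u (c d)"
      using d(2) ready_time_less[OF k] by simp
    moreover have "measure lebesgue (awake_set D S \<inter> {r..<min u (compl S d)})
        \<le> measure lebesgue (awake_set D S \<inter> {r..<min u (compl S k)})"
      using awake_set_borel[OF valid] compl_d by (intro measure_Int_Ico_mono) auto
    ultimately show ?thesis
      using order_trans[OF prev mult_left_mono[of _ _ "sqrt (real p)"]] by simp
  next
    case False
    have "compl S d \<le> u"
      using False ready_time_less[OF d_less] by (intro completed_if_idle[OF u(2) d_less]) simp
    have "compl S k \<le> u"
      using False d(2) by (intro completed_if_idle[OF u(2) k]) simp
    have "measure lebesgue (unsaturated \<inter> {r..<min u (c k)}) \<le> measure lebesgue (unsaturated \<inter> {r..<c k})"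
      using unsaturated_borel by (intro measure_Int_Ico_mono) auto
    also have "\<dots> \<le> sqrt (real p) * measure lebesgue (awake_set D S \<inter> {r..<compl S k})"
      by (rule unsaturated_chain_link[OF S k d r]) (use prev False \<open>compl S d \<le> u\<close> in \<open>simp add: min_absorb2\<close>)
    finally show ?thesis
      using \<open>compl S k \<le> u\<close> by (simp add: min_absorb2)
  qed
qed

lemma critical_path:
  assumes S: "valid_sched p D S" and k: "k < length D"
  shows "\<exists>j<length D. release (D!j) \<le> ready_time D c k \<and> release (D!j) \<le> compl S k
    \<and> chain_charged S k (release (D!j))"
  using k
proof (induction k rule: measure_induct_rule[where f = "\<lambda>k. card {j. j < length D \<and> ready_time D c j < ready_time D c k}"])
  case (less k)
  have fin_k: "finite (deps (D!k))"
    by (rule valid_dtap_finite_deps[OF valid less.prems])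
  have ready_S: "release (D!k) \<le> ready_time D (compl S) k" "ready_time D (compl S) k < compl S k"
    using ready_time_ge_release[OF fin_k] ready_time_less_compl[OF valid S less.prems] by auto
  consider "ready_time D c k = release (D!k)" | d where "d \<in> deps (D!k)" "ready_time D c k = c d"
    using ready_time_cases[OF fin_k] by blast
  then show ?case
  proof cases
    case 1
    then show ?thesis
      using less.prems ready_S chain_charged_release[OF S less.prems] by fastforce
  next
    case (2 d)
    have d: "d < length D"
      using valid_dtap_dep_less[OF valid less.prems 2(1)] .
    have ready_d: "ready_time D c d < ready_time D c k"
      using ready_time_less[OF d] 2(2) by simp
    have "card {j. j < length D \<and> ready_time D c j < ready_time D c d}
        < card {j. j < length D \<and> ready_time D c j < ready_time D c k}"
      using ready_d d by (intro psubset_card_mono) auto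
    then obtain j where j: "j < length D" "release (D!j) \<le> ready_time D c d" "release (D!j) \<le> compl S d"
      and charged: "chain_charged S d (release (D!j))"
      using less.IH[OF _ d] by blast
    have "compl S d \<le> compl S k"
      using ready_time_ge_dep[OF fin_k 2(1), of "compl S"] ready_S(2) by simp
    then show ?thesis
      using j ready_d chain_charged_dependency[OF S less.prems 2 j(3) charged] by fastforce
  qed
qed

lemma unsaturated_chain_bound:
  assumes S: "valid_sched p D S" and k: "k < length D" and t: "ready_time D c k < t" "t \<le> c k"
  shows "\<exists>j<length D. release (D!j) < t \<and>
    measure lebesgue (unsaturated \<inter> {release (D!j)..<t}) \<le> sqrt (real p) * measure lebesgue (awake_set D S \<inter> {release (D!j)..<t})"
proof -
  obtain j where j: "j < length D" "release (D!j) \<le> ready_time D c k"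
    and "chain_charged S k (release (D!j))"
    using critical_path[OF S k] by blast
  then have bound: "\<And>u. release (D!j) \<le> u \<Longrightarrow> u \<notin> awake_set D S \<Longrightarrow>
      measure lebesgue (unsaturated \<inter> {release (D!j)..<min u (c k)})
        \<le> sqrt (real p) * measure lebesgue (awake_set D S \<inter> {release (D!j)..<min u (compl S k)})"
    unfolding chain_charged_def by blast
  have "measure lebesgue (unsaturated \<inter> {release (D!j)..<t}) \<le> sqrt (real p) * measure lebesgue (awake_set D S \<inter> {release (D!j)..<t})"
  proof (rule measure_Ico_bound_from_gaps[OF unsaturated_borel awake_set_borel[OF valid]])
    fix u
    assume u: "release (D!j) \<le> u" "u \<le> t" "u \<notin> awake_set D S"
    have "measure lebesgue (awake_set D S \<inter> {release (D!j)..<min u (compl S k)})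
        \<le> measure lebesgue (awake_set D S \<inter> {release (D!j)..<u})"
      using awake_set_borel[OF valid] by (intro measure_Int_Ico_mono) auto
    then show "measure lebesgue (unsaturated \<inter> {release (D!j)..<u}) \<le> sqrt (real p) * measure lebesgue (awake_set D S \<inter> {release (D!j)..<u})"
      using order_trans[OF bound[OF u(1,3)] mult_left_mono[of _ _ "sqrt (real p)"]] u(2) t(2) by simp
  qed (use p_pos j t in auto)
  then show ?thesis
    using j t by force
qed

lemma unsaturated_tail:
  assumes "unsaturated \<inter> {0..<T} \<noteq> {}"
  obtains k t where "k < length D" "ready_time D c k < t" "t \<le> c k" "t \<le> T" "unsaturated \<inter> {t..<T} = {}"
proof -
  define K where "K = {k. k < length D \<and> ready_time D c k < T}"
  obtain x i where "i < length D" "active D c i x" "x < T"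
    using assms unfolding unsaturated_def by auto
  then have "i \<in> K"
    unfolding K_def active_def by auto
  then have K: "finite K" "K \<noteq> {}"
    unfolding K_def by auto
  define t where "t = Max ((\<lambda>k. min (c k) T) ` K)"
  have t_ge: "min (c k) T \<le> t" if "k \<in> K" for k
    unfolding t_def using K that by (intro Max_ge) auto
  have "t \<in> (\<lambda>k. min (c k) T) ` K"
    unfolding t_def using K by (intro Max_in) auto
  then obtain k where k: "k \<in> K" "t = min (c k) T"
    by blast
  have "unsaturated \<inter> {t..<T} = {}"
  proof (rule ccontr)
    assume "unsaturated \<inter> {t..<T} \<noteq> {}"
    then obtain x' i' where "i' < length D" "active D c i' x'" "t \<le> x'" "x' < T"
      unfolding unsaturated_def by auto
    moreover from this have "min (c i') T \<le> t"
      by (intro t_ge) (auto simp: K_def active_def)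
    ultimately show False
      unfolding active_def by auto
  qed
  moreover have "k < length D" "ready_time D c k < t" "t \<le> c k" "t \<le> T"
    using k ready_time_less[of k] unfolding K_def by auto
  ultimately show ?thesis
    using that by blast
qed

lemma unsaturated_bound:
  assumes S: "valid_sched p D S"
  shows "measure lebesgue (unsaturated \<inter> {0..<T}) \<le> sqrt (real p) * measure lebesgue (awake_set D S \<inter> {0..<T})"
proof (rule measure_Ico_bound_by_cuts[OF _ unsaturated_borel awake_set_borel[OF valid]])
  fix T
  assume "unsaturated \<inter> {0..<T} \<noteq> {}"
  then obtain k t where k: "k < length D" "ready_time D c k < t" "t \<le> c k" "t \<le> T"
    and tail: "unsaturated \<inter> {t..<T} = {}"
    by (rule unsaturated_tail)
  then obtain j where j: "j < length D" "release (D!j) < t"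
    and bound: "measure lebesgue (unsaturated \<inter> {release (D!j)..<t})
      \<le> sqrt (real p) * measure lebesgue (awake_set D S \<inter> {release (D!j)..<t})"
    using unsaturated_chain_bound[OF S] by blast
  have "unsaturated \<inter> {release (D!j)..<T} = unsaturated \<inter> {release (D!j)..<t}"
    using tail k(4) by auto
  moreover have "measure lebesgue (awake_set D S \<inter> {release (D!j)..<t}) \<le> measure lebesgue (awake_set D S \<inter> {release (D!j)..<T})"
    using awake_set_borel[OF valid] k(4) by (intro measure_Int_Ico_mono) auto
  ultimately show "\<exists>r\<in>(\<lambda>j. release (D!j)) ` {..<length D}. 0 \<le> r \<and> r < T \<and>
    measure lebesgue (unsaturated \<inter> {r..<T}) \<le> sqrt (real p) * measure lebesgue (awake_set D S \<inter> {r..<T})"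
    using j k(4) valid_dtap_release_nonneg[OF valid j(1)] order_trans[OF bound mult_left_mono[of _ _ "sqrt (real p)"]]
    by (intro bexI[of _ "release (D!j)"]) auto
qed simp_all

lemma awake_set_sched_of_subset:
  "awake_set D (sched_of p D c) \<subseteq> (unsaturated \<union> saturated) \<union> ready_time D c ` {..<length D}"
proof
  fix t
  assume "t \<in> awake_set D (sched_of p D c)"
  then obtain i where i: "i < length D" "alive D (sched_of p D c) i t"
    unfolding awake_set_def by auto
  then have "ready_time D c i \<le> t" "t < c i"
    using alive_iff_ready_time[OF valid_dtap_finite_deps[OF valid i(1)]] by simp_all
  show "t \<in> (unsaturated \<union> saturated) \<union> ready_time D c ` {..<length D}"
  proof (cases "ready_time D c i = t")
    case False
    then have "active D c i t"
      using i(1) \<open>ready_time D c i \<le> t\<close> \<open>t < c i\<close> unfolding active_def by simp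
    then show ?thesis
      using i(1) total_rate_le[of p D c t] unfolding unsaturated_def saturated_def by force
  qed (use i in auto)
qed

lemma awake_time_bound:
  assumes S: "valid_sched p D S"
  shows "awake_time D (sched_of p D c) \<le> 2 * sqrt (real p) * awake_time D S"
proof -
  define M where "M = Max (insert 0 (c ` {..<length D}))"
  have c_le: "c i \<le> M" if "i < length D" for i
    unfolding M_def using that by (intro Max_ge) auto
  have active_in: "t \<in> {0..<M + 1}" if "active D c i t" for i t
    using that active_pos c_le[of i] unfolding active_def by force
  have bounded: "unsaturated \<union> saturated \<subseteq> {0..<M + 1}"
    using active_in unfolding unsaturated_def saturated_def by blast
  moreover have "bounded {0..<M + 1}"
    by (rule bounded_subset[of "{0..M + 1}"]) auto
  ultimately have bnd: "bounded unsaturated" "bounded saturated"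
    by (meson bounded_subset le_sup_iff)+
  have "awake_time D (sched_of p D c) \<le> measure lebesgue ((unsaturated \<union> saturated) \<union> ready_time D c ` {..<length D})"
    unfolding awake_time_eq using awake_set_sched_of_subset bnd awake_set_borel[OF valid] unsaturated_borel saturated_borel
    by (intro measure_lebesgue_mono_bounded) (auto intro: finite_imp_closed borel_closed)
  also have "\<dots> = measure lebesgue (unsaturated \<union> saturated)"
    using unsaturated_borel saturated_borel by (intro measure_lebesgue_Un_finite) auto
  also have "\<dots> \<le> measure lebesgue unsaturated + measure lebesgue saturated"
    using unsaturated_borel saturated_borel by (intro measure_Un_le) (auto intro: sets_lebesgue_if_borel)
  also have "measure lebesgue unsaturated = measure lebesgue (unsaturated \<inter> {0..<M + 1})"
    using bounded by (simp add: Int_absorb2)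
  also have "\<dots> \<le> sqrt (real p) * measure lebesgue (awake_set D S \<inter> {0..<M + 1})"
    by (rule unsaturated_bound[OF S])
  also have "\<dots> \<le> sqrt (real p) * awake_time D S"
    unfolding awake_time_eq using awake_set_borel[OF valid] awake_set_bounded[OF valid]
    by (intro mult_left_mono measure_lebesgue_mono_bounded) auto
  finally show ?thesis
    using saturated_bound[OF S] by simp
qed

end

theorem proposition7p2:
  shows "\<exists>C::real. \<forall>p::nat. p \<ge> 1 \<longrightarrow>
           (\<exists>A. online p A \<and>
                (\<forall>D. valid_dtap p D \<longrightarrow>
                   valid_sched p D (A D) \<and>
                   (\<forall>S. valid_sched p D S \<longrightarrow>
                      awake_time D (A D) \<le> C * sqrt (real p) * awake_time D S)))"
proof (intro exI[of _ 2] allI impI)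
  fix p :: nat
  assume p: "p \<ge> 1"
  show "\<exists>A. online p A \<and> (\<forall>D. valid_dtap p D \<longrightarrow> valid_sched p D (A D) \<and>
    (\<forall>S. valid_sched p D S \<longrightarrow> awake_time D (A D) \<le> 2 * sqrt (real p) * awake_time D S))"
  proof (intro exI[of _ "balanced_sched p"] conjI allI impI)
    show "online p (balanced_sched p)"
      using p by (rule balanced_sched_online)
  next
    fix D
    assume valid: "valid_dtap p D"
    then show "valid_sched p D (balanced_sched p D)"
      using p by (rule valid_balanced_sched)
    fix S
    assume "valid_sched p D S"
    interpret balanced_run p D "compl (balanced_sched p D)"
      using valid p consistent_balanced_sched by unfold_locales auto
    show "awake_time D (balanced_sched p D) \<le> 2 * sqrt (real p) * awake_time D S"
      using awake_time_bound[OF \<open>valid_sched p D S\<close>] balanced_sched_eq[of p D] by simp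
  qed
qed

end
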